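(* Let $\mathcal X\subseteq\{\pm1\}^d$, let $r,K,q$ be positive integers, let $L>0$, and let $k$ be an odd integer with $1\le k\le d$. Let $G^0,G^1,\ldots,G^r:\{\pm1\}^d\to\{\pm1\}^d$ with $G^0(\mathbf x)=\mathbf x$, and suppose that for every $i\in[r]$ and $j\in[d]$ there is a function $p^i_j:\{\pm1\}^d\to\{\pm1\}$ whose multilinear extension is a polynomial of degree at most $K$ that is $L$-Lipschitz on $[-1,1]^d$ with respect to $\|\cdot\|_\infty$, such that $G^i_j(\mathbf x)=p^i_j(G^{i-1}(\mathbf x))$ for all $\mathbf x\in\mathcal X$. Independently for every $i\in[r]$ and $j\in[q]$ draw $\mathbf w^{i,j}$ uniformly from $\mathcal W_{d,k}=\{\mathbf w\in\{-1,0,1\}^d:\sum_{l=1}^d|w_l|=k\}$ and set $f^*_{i,j}(\mathbf x)=\mathrm{sign}\big(\sum_{l=1}^d w^{i,j}_lG^i_l(\mathbf x)\big)$ for $\mathbf x\in\mathcal X$. Let $\mathbf f^*=(f^*_{i,j})_{i\in[r],j\in[q]}:\mathcal X\to\{\pm1\}^{rq}$. Then, with probability at least $1-4drq|\mathcal X|e^{-\Omega\left(\frac{q}{L^2k^2d}\right)}$ over the choice of the $\mathbf w^{i,j}$, the function $\mathbf f^*$ has an $\left(r,K,O\left(kd^K\right),2k+1\right)$-hierarchy, with levels $L_i=\{(i',j):i'\le i,\ j\in[q]\}$.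
   Context: For a polynomial $p$, $\|p\|_{\mathrm{co}}$ denotes the Euclidean norm of its coefficient vector (in the monomial basis). For $h:\mathcal X\to\mathbb R^s$ and $f:\mathcal X\to\{\pm1\}$, $f$ is a $(K,M,B)$-PTF of $h$ if there is a polynomial $p:\mathbb R^s\to\mathbb R$ of degree at most $K$ with $\|p\|_{\mathrm{co}}\le M$ and $B\ge p(h(\mathbf x))f(\mathbf x)\ge1$ for all $\mathbf x\in\mathcal X$; a $(K,M,B)$-PTF (of the input) is a $(K,M,B)$-PTF of the identity map. For labels $\mathbf f^*=(f^*_\ell)_{\ell\in\Lambda}$ and nested sets $L_1\subseteq\cdots\subseteq L_r=\Lambda$, $\mathbf f^*$ has an $(r,K,M,B)$-hierarchy (with these levels) if every $f^*_\ell$, $\ell\in L_1$, is a $(K,M,B)$-PTF of the input, and for $i\ge2$ every $f^*_\ell$, $\ell\in L_i$, is a $(K,M,B)$-PTF of $\mathbf f^*_{L_{i-1}}=(f^*_{\ell'})_{\ell'\in L_{i-1}}$. The constants in $O(\cdot),\Omega(\cdot)$ may depend on $K$. *)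

theory Defs
  imports "HOL-Analysis.Analysis" "HOL-Library.Poly_Mapping" "HOL-Probability.Probability"
begin

text \<open>Multivariate real polynomials in variables of type 'v, in the monomial basis:
  a finitely supported map from monomials (exponent vectors 'v =>0 nat) to real coefficients.\<close>

type_synonym 'v rpoly = "('v \<Rightarrow>\<^sub>0 nat) \<Rightarrow>\<^sub>0 real"

definition rpoly_eval :: "'v rpoly \<Rightarrow> ('v \<Rightarrow> real) \<Rightarrow> real" where
  "rpoly_eval p z = (\<Sum>\<alpha>\<in>Poly_Mapping.keys p. Poly_Mapping.lookup p \<alpha> * (\<Prod>v\<in>Poly_Mapping.keys \<alpha>. z v ^ Poly_Mapping.lookup \<alpha> v))"

definition mono_deg :: "('v \<Rightarrow>\<^sub>0 nat) \<Rightarrow> nat" where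
  "mono_deg \<alpha> = (\<Sum>v\<in>Poly_Mapping.keys \<alpha>. Poly_Mapping.lookup \<alpha> v)"

definition rpoly_deg_le :: "'v rpoly \<Rightarrow> nat \<Rightarrow> bool" where
  "rpoly_deg_le p K \<longleftrightarrow> (\<forall>\<alpha>\<in>Poly_Mapping.keys p. mono_deg \<alpha> \<le> K)"

definition rpoly_vars :: "'v rpoly \<Rightarrow> 'v set" where
  "rpoly_vars p = (\<Union>\<alpha>\<in>Poly_Mapping.keys p. Poly_Mapping.keys \<alpha>)"

definition coeff_norm :: "'v rpoly \<Rightarrow> real" where
  "coeff_norm p = sqrt (\<Sum>\<alpha>\<in>Poly_Mapping.keys p. (Poly_Mapping.lookup p \<alpha>)^2)"

definition multilinear :: "'v rpoly \<Rightarrow> bool" where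
  "multilinear p \<longleftrightarrow> (\<forall>\<alpha>\<in>Poly_Mapping.keys p. \<forall>v. Poly_Mapping.lookup \<alpha> v \<le> 1)"

text \<open>Points of R^d are functions nat => real, only coordinates 0..d-1 being relevant;
  the hypercube {+-1}^d is represented canonically (coordinates >= d are 0).\<close>
definition cube :: "nat \<Rightarrow> (nat \<Rightarrow> real) set" where
  "cube d = {x. (\<forall>l<d. x l \<in> {-1, 1}) \<and> (\<forall>l\<ge>d. x l = 0)}"

definition is_multilinear_ext :: "nat \<Rightarrow> ((nat \<Rightarrow> real) \<Rightarrow> real) \<Rightarrow> nat rpoly \<Rightarrow> bool" where
  "is_multilinear_ext d g P \<longleftrightarrow> multilinear P \<and> rpoly_vars P \<subseteq> {..<d} \<and>
     (\<forall>x\<in>cube d. rpoly_eval P x = g x)"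

definition lipschitz_box :: "nat \<Rightarrow> real \<Rightarrow> nat rpoly \<Rightarrow> bool" where
  "lipschitz_box d L P \<longleftrightarrow> (\<forall>y z. (\<forall>l<d. \<bar>y l\<bar> \<le> 1 \<and> \<bar>z l\<bar> \<le> 1) \<longrightarrow>
     \<bar>rpoly_eval P y - rpoly_eval P z\<bar> \<le> L * Max ((\<lambda>l. \<bar>y l - z l\<bar>) ` {..<d}))"

definition is_PTF :: "'x set \<Rightarrow> 'v set \<Rightarrow> ('x \<Rightarrow> 'v \<Rightarrow> real) \<Rightarrow> ('x \<Rightarrow> real)
     \<Rightarrow> nat \<Rightarrow> real \<Rightarrow> real \<Rightarrow> bool" where
  "is_PTF X V h f K M B \<longleftrightarrow> (\<exists>p. rpoly_vars p \<subseteq> V \<and> rpoly_deg_le p K \<and> coeff_norm p \<le> M \<and>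
     (\<forall>x\<in>X. 1 \<le> rpoly_eval p (h x) * f x \<and> rpoly_eval p (h x) * f x \<le> B))"

definition has_hierarchy :: "(nat \<Rightarrow> real) set \<Rightarrow> nat \<Rightarrow> nat \<Rightarrow> (nat \<Rightarrow> 'l set)
     \<Rightarrow> ('l \<Rightarrow> (nat \<Rightarrow> real) \<Rightarrow> real) \<Rightarrow> nat \<Rightarrow> real \<Rightarrow> real \<Rightarrow> bool" where
  "has_hierarchy X d r Lv f K M B \<longleftrightarrow>
     (\<forall>i\<in>{1..<r}. Lv i \<subseteq> Lv (Suc i)) \<and>
     (\<forall>m\<in>Lv 1. is_PTF X {..<d} (\<lambda>x. x) (f m) K M B) \<and>
     (\<forall>i\<in>{2..r}. \<forall>m\<in>Lv i. is_PTF X (Lv (i - 1)) (\<lambda>x m'. f m' x) (f m) K M B)"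

definition Wdk :: "nat \<Rightarrow> nat \<Rightarrow> (nat \<Rightarrow> real) set" where
  "Wdk d k = {w. (\<forall>l<d. w l \<in> {-1, 0, 1}) \<and> (\<forall>l\<ge>d. w l = 0) \<and> (\<Sum>l<d. \<bar>w l\<bar>) = real k}"

definition levels :: "nat \<Rightarrow> nat \<Rightarrow> (nat \<times> nat) set" where
  "levels q i = {1..i} \<times> {1..q}"

definition fstar :: "nat \<Rightarrow> (nat \<Rightarrow> (nat \<Rightarrow> real) \<Rightarrow> (nat \<Rightarrow> real))
     \<Rightarrow> (nat \<times> nat \<Rightarrow> nat \<Rightarrow> real) \<Rightarrow> nat \<times> nat \<Rightarrow> (nat \<Rightarrow> real) \<Rightarrow> real" where
  "fstar d G W ij x = sgn (\<Sum>l<d. W ij l * G (fst ij) x l)"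

end

theory Submission
  imports Defs
begin

(* Level 1: if P_l is the multilinear extension of the l-th first-layer map, then
   sum_l w_l P_l is a degree-K polynomial with sign f*_{1,j}.  Parseval bounds the l1 norm
   of each P_l by sqrt((K+1) d^K), and since k is odd, |w . G(x)| lies in [1, k].
   Level i > 1: by the sign-flip and coordinate symmetries of W_{d,k},
   E[w_v sgn(w . z)] = nu z_v for every z in the cube, where d nu >= sqrt k / 5 by a
   Khintchine inequality.  So the labels of level i-1 give the linear estimates
   sum_j w^{i-1,j}_v f*_{i-1,j}(x) / ((1+eps) q nu) of G^{i-1}(x)_v, eps = 1/(4kL).  A
   Bernstein-type bound with variance k/d shows that, outside an event of probability
   4 exp(-q/(1600 L^2 k^2 d)) per triple (i, x, v), every estimate is (2 eps)-accurate and
   has l1 norm at most 10 sqrt k.  Substituting the estimates into the P_l and using the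
   Lipschitz bound yields a PTF of the previous level with margin in [1, 2k+1] and
   coefficient norm O(k d^K).  If L < 1, every p^i_j is constant on the cube, and the
   hierarchy exists for every choice of weights. *)

definition mono_eval :: "('v \<Rightarrow>\<^sub>0 nat) \<Rightarrow> ('v \<Rightarrow> real) \<Rightarrow> real" where
  "mono_eval \<alpha> z = (\<Prod>v\<in>Poly_Mapping.keys \<alpha>. z v ^ Poly_Mapping.lookup \<alpha> v)"

definition coeff_l1_norm :: "'v rpoly \<Rightarrow> real" where
  "coeff_l1_norm p = (\<Sum>\<alpha>\<in>Poly_Mapping.keys p. \<bar>Poly_Mapping.lookup p \<alpha>\<bar>)"

definition rpoly_var :: "'v \<Rightarrow> 'v rpoly" where
  "rpoly_var v = Poly_Mapping.single (Poly_Mapping.single v 1) 1"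

definition rpoly_const :: "real \<Rightarrow> 'v rpoly" where
  "rpoly_const c = Poly_Mapping.single 0 c"

lemma sum_keys_superset:
  fixes p :: "'a \<Rightarrow>\<^sub>0 'b::zero" and f :: "'a \<Rightarrow> 'b \<Rightarrow> 'c::comm_monoid_add"
  assumes "finite S" "Poly_Mapping.keys p \<subseteq> S" "\<And>a. f a 0 = 0"
  shows "(\<Sum>a\<in>Poly_Mapping.keys p. f a (Poly_Mapping.lookup p a)) = (\<Sum>a\<in>S. f a (Poly_Mapping.lookup p a))"
  by (rule sum.mono_neutral_left) (use assms in \<open>auto simp: in_keys_iff\<close>)

lemma prod_keys_superset:
  fixes p :: "'a \<Rightarrow>\<^sub>0 'b::zero" and f :: "'a \<Rightarrow> 'b \<Rightarrow> 'c::comm_monoid_mult"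
  assumes "finite S" "Poly_Mapping.keys p \<subseteq> S" "\<And>a. f a 0 = 1"
  shows "(\<Prod>a\<in>Poly_Mapping.keys p. f a (Poly_Mapping.lookup p a)) = (\<Prod>a\<in>S. f a (Poly_Mapping.lookup p a))"
  by (rule prod.mono_neutral_left) (use assms in \<open>auto simp: in_keys_iff\<close>)

lemma keys_add_nat: "Poly_Mapping.keys (\<alpha> + \<beta> :: 'v \<Rightarrow>\<^sub>0 nat) = Poly_Mapping.keys \<alpha> \<union> Poly_Mapping.keys \<beta>"
  by (auto simp: in_keys_iff lookup_add)

lemma mono_eval_add: "mono_eval (\<alpha> + \<beta>) z = mono_eval \<alpha> z * mono_eval \<beta> z"
proof -
  let ?S = "Poly_Mapping.keys \<alpha> \<union> Poly_Mapping.keys \<beta>"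
  have "mono_eval \<gamma> z = (\<Prod>v\<in>?S. z v ^ Poly_Mapping.lookup \<gamma> v)" if "Poly_Mapping.keys \<gamma> \<subseteq> ?S" for \<gamma>
    unfolding mono_eval_def by (rule prod_keys_superset) (use that in auto)
  then show ?thesis
    by (simp add: keys_add_nat lookup_add power_add prod.distrib)
qed

lemma rpoly_eval_altdef: "rpoly_eval p z = (\<Sum>\<alpha>\<in>Poly_Mapping.keys p. Poly_Mapping.lookup p \<alpha> * mono_eval \<alpha> z)"
  by (simp add: rpoly_eval_def mono_eval_def)

lemma rpoly_eval_add: "rpoly_eval (p + q) z = rpoly_eval p z + rpoly_eval q z"
proof -
  let ?S = "Poly_Mapping.keys p \<union> Poly_Mapping.keys q"
  have "rpoly_eval s z = (\<Sum>\<alpha>\<in>?S. Poly_Mapping.lookup s \<alpha> * mono_eval \<alpha> z)" if "Poly_Mapping.keys s \<subseteq> ?S" for s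
    unfolding rpoly_eval_altdef by (rule sum_keys_superset) (use that in auto)
  moreover have "Poly_Mapping.keys (p + q) \<subseteq> ?S" by (rule keys_add)
  ultimately show ?thesis
    by (simp add: lookup_add distrib_right sum.distrib)
qed

lemma rpoly_eval_zero [simp]: "rpoly_eval 0 z = 0"
  by (simp add: rpoly_eval_def)

lemma rpoly_eval_one [simp]: "rpoly_eval 1 z = 1"
  by (simp add: rpoly_eval_def)

lemma rpoly_eval_sum: "rpoly_eval (\<Sum>i\<in>A. p i) z = (\<Sum>i\<in>A. rpoly_eval (p i) z)"
  by (induction A rule: infinite_finite_induct) (auto simp: rpoly_eval_add)

lemma rpoly_eval_single: "rpoly_eval (Poly_Mapping.single \<alpha> c) z = c * mono_eval \<alpha> z"
  by (cases "c = 0") (auto simp: rpoly_eval_altdef)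

lemma rpoly_sum_single: "p = (\<Sum>\<alpha>\<in>Poly_Mapping.keys p. Poly_Mapping.single \<alpha> (Poly_Mapping.lookup p \<alpha>))"
  by (rule poly_mapping_eqI) (auto simp: lookup_sum lookup_single when_def in_keys_iff)

lemma rpoly_mult_expand: "(p::'v rpoly) * q = (\<Sum>\<alpha>\<in>Poly_Mapping.keys p. \<Sum>\<beta>\<in>Poly_Mapping.keys q.
   Poly_Mapping.single (\<alpha> + \<beta>) (Poly_Mapping.lookup p \<alpha> * Poly_Mapping.lookup q \<beta>))"
  by (subst (1) rpoly_sum_single, subst (2) rpoly_sum_single) (simp add: sum_product mult_single)

lemma rpoly_eval_mult: "rpoly_eval (p * q) z = rpoly_eval p z * rpoly_eval q z"
  by (subst rpoly_mult_expand, simp only: rpoly_eval_sum rpoly_eval_single mono_eval_add)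
    (simp add: rpoly_eval_altdef sum_product mult_ac)

lemma rpoly_eval_power: "rpoly_eval (p ^ n) z = rpoly_eval p z ^ n"
  by (induction n) (auto simp: rpoly_eval_mult)

lemma rpoly_eval_prod: "rpoly_eval (\<Prod>i\<in>A. p i) z = (\<Prod>i\<in>A. rpoly_eval (p i) z)"
  by (induction A rule: infinite_finite_induct) (auto simp: rpoly_eval_mult)

lemma rpoly_eval_var [simp]: "rpoly_eval (rpoly_var v) z = z v"
  by (simp add: rpoly_var_def rpoly_eval_single mono_eval_def)

lemma rpoly_eval_const [simp]: "rpoly_eval (rpoly_const c) z = c"
  by (simp add: rpoly_const_def rpoly_eval_single mono_eval_def)

lemma coeff_l1_norm_nonneg: "coeff_l1_norm p \<ge> 0"
  by (simp add: coeff_l1_norm_def sum_nonneg)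

lemma coeff_l1_norm_add: "coeff_l1_norm (p + q) \<le> coeff_l1_norm p + coeff_l1_norm q"
proof -
  let ?S = "Poly_Mapping.keys p \<union> Poly_Mapping.keys q"
  have "coeff_l1_norm s = (\<Sum>\<alpha>\<in>?S. \<bar>Poly_Mapping.lookup s \<alpha>\<bar>)" if "Poly_Mapping.keys s \<subseteq> ?S" for s
    unfolding coeff_l1_norm_def by (rule sum_keys_superset) (use that in auto)
  moreover have "Poly_Mapping.keys (p + q) \<subseteq> ?S" by (rule keys_add)
  ultimately show ?thesis
    by (simp add: lookup_add sum.distrib[symmetric] sum_mono abs_triangle_ineq)
qed

lemma coeff_l1_norm_sum: "coeff_l1_norm (\<Sum>i\<in>A. p i) \<le> (\<Sum>i\<in>A. coeff_l1_norm (p i))"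
proof (induction A rule: infinite_finite_induct)
  case (insert x F)
  then show ?case using coeff_l1_norm_add[of "p x" "sum p F"] by simp
qed (auto simp: coeff_l1_norm_def)

lemma coeff_l1_norm_single [simp]: "coeff_l1_norm (Poly_Mapping.single \<alpha> c) = \<bar>c\<bar>"
  by (cases "c = 0") (auto simp: coeff_l1_norm_def)

lemma coeff_l1_norm_mult: "coeff_l1_norm ((p::'v rpoly) * q) \<le> coeff_l1_norm p * coeff_l1_norm q"
proof -
  have "coeff_l1_norm (p * q) \<le> (\<Sum>\<alpha>\<in>Poly_Mapping.keys p. \<Sum>\<beta>\<in>Poly_Mapping.keys q.
       \<bar>Poly_Mapping.lookup p \<alpha> * Poly_Mapping.lookup q \<beta>\<bar>)"
    unfolding rpoly_mult_expand
    by (rule order_trans[OF coeff_l1_norm_sum], rule sum_mono, rule order_trans[OF coeff_l1_norm_sum]) simp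
  also have "\<dots> = coeff_l1_norm p * coeff_l1_norm q"
    by (simp add: coeff_l1_norm_def sum_product abs_mult)
  finally show ?thesis .
qed

lemma coeff_l1_norm_one [simp]: "coeff_l1_norm (1::'v rpoly) = 1"
  by (simp add: coeff_l1_norm_def)

lemma coeff_l1_norm_power: "coeff_l1_norm ((p::'v rpoly) ^ n) \<le> coeff_l1_norm p ^ n"
proof (induction n)
  case (Suc n)
  have "coeff_l1_norm (p ^ Suc n) \<le> coeff_l1_norm p * coeff_l1_norm (p ^ n)"
    by (simp add: coeff_l1_norm_mult)
  also have "\<dots> \<le> coeff_l1_norm p * coeff_l1_norm p ^ n"
    by (rule mult_left_mono[OF Suc coeff_l1_norm_nonneg])
  finally show ?case by simp
qed simp

lemma coeff_l1_norm_prod: "coeff_l1_norm (\<Prod>i\<in>A. (p i :: 'v rpoly)) \<le> (\<Prod>i\<in>A. coeff_l1_norm (p i))"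
proof (induction A rule: infinite_finite_induct)
  case (insert x F)
  have "coeff_l1_norm (\<Prod>i\<in>insert x F. p i) \<le> coeff_l1_norm (p x) * coeff_l1_norm (\<Prod>i\<in>F. p i)"
    using insert by (simp add: coeff_l1_norm_mult)
  also have "\<dots> \<le> coeff_l1_norm (p x) * (\<Prod>i\<in>F. coeff_l1_norm (p i))"
    by (rule mult_left_mono[OF insert(3) coeff_l1_norm_nonneg])
  finally show ?case using insert by simp
qed auto

lemma coeff_l1_norm_var [simp]: "coeff_l1_norm (rpoly_var v) = 1"
  by (simp add: rpoly_var_def)

lemma coeff_l1_norm_const [simp]: "coeff_l1_norm (rpoly_const c) = \<bar>c\<bar>"
  by (simp add: rpoly_const_def)

lemma coeff_l1_norm_const_mult: "coeff_l1_norm (rpoly_const c * p) \<le> \<bar>c\<bar> * coeff_l1_norm p"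
  using coeff_l1_norm_mult[of "rpoly_const c" p] by (simp add: rpoly_const_def)

lemma coeff_norm_le_l1_norm: "coeff_norm p \<le> coeff_l1_norm p"
  using L2_set_le_sum_abs[of "Poly_Mapping.lookup p" "Poly_Mapping.keys p"]
  by (simp add: coeff_norm_def coeff_l1_norm_def L2_set_def)

lemma mono_deg_add: "mono_deg (\<alpha> + \<beta>) = mono_deg \<alpha> + mono_deg \<beta>"
proof -
  let ?S = "Poly_Mapping.keys \<alpha> \<union> Poly_Mapping.keys \<beta>"
  have "mono_deg \<gamma> = (\<Sum>v\<in>?S. Poly_Mapping.lookup \<gamma> v)" if "Poly_Mapping.keys \<gamma> \<subseteq> ?S" for \<gamma>
    unfolding mono_deg_def using sum_keys_superset[of ?S \<gamma> "\<lambda>_ n. n"] that by simp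
  then show ?thesis by (simp add: keys_add_nat lookup_add sum.distrib)
qed

lemma rpoly_deg_le_zero [simp]: "rpoly_deg_le 0 K"
  by (simp add: rpoly_deg_le_def)

lemma rpoly_deg_le_one [simp]: "rpoly_deg_le 1 K"
  by (simp add: rpoly_deg_le_def mono_deg_def)

lemma rpoly_deg_le_add: "rpoly_deg_le p K \<Longrightarrow> rpoly_deg_le q K \<Longrightarrow> rpoly_deg_le (p + q) K"
  unfolding rpoly_deg_le_def using keys_add[of p q] by blast

lemma rpoly_deg_le_sum: "(\<And>i. i \<in> A \<Longrightarrow> rpoly_deg_le (p i) K) \<Longrightarrow> rpoly_deg_le (\<Sum>i\<in>A. p i) K"
  by (induction A rule: infinite_finite_induct) (auto intro: rpoly_deg_le_add)

lemma rpoly_deg_le_mult: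
  "rpoly_deg_le p K1 \<Longrightarrow> rpoly_deg_le q K2 \<Longrightarrow> rpoly_deg_le (p * q) (K1 + K2)"
  unfolding rpoly_deg_le_def using keys_mult[of p q] by (fastforce simp: mono_deg_add)

lemma rpoly_deg_le_mono: "rpoly_deg_le p K1 \<Longrightarrow> K1 \<le> K2 \<Longrightarrow> rpoly_deg_le p K2"
  unfolding rpoly_deg_le_def by auto

lemma rpoly_deg_le_const [simp]: "rpoly_deg_le (rpoly_const c) K"
  by (simp add: rpoly_deg_le_def mono_deg_def rpoly_const_def)

lemma rpoly_deg_le_const_mult: "rpoly_deg_le p K \<Longrightarrow> rpoly_deg_le (rpoly_const c * p) K"
  using rpoly_deg_le_mult[OF rpoly_deg_le_const[of c 0]] by fastforce

lemma rpoly_deg_le_var: "K \<ge> 1 \<Longrightarrow> rpoly_deg_le (rpoly_var v) K"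
  by (simp add: rpoly_deg_le_def mono_deg_def rpoly_var_def)

lemma rpoly_deg_le_power: "rpoly_deg_le p K \<Longrightarrow> rpoly_deg_le (p ^ n) (n * K)"
  by (induction n) (auto intro: rpoly_deg_le_mult[of _ K _ "_ * K", simplified])

lemma rpoly_deg_le_prod:
  "(\<And>i. i \<in> A \<Longrightarrow> rpoly_deg_le (p i) (D i)) \<Longrightarrow> rpoly_deg_le (\<Prod>i\<in>A. p i) (\<Sum>i\<in>A. D i)"
  by (induction A rule: infinite_finite_induct) (auto intro: rpoly_deg_le_mult)

lemma rpoly_vars_zero [simp]: "rpoly_vars 0 = {}"
  by (simp add: rpoly_vars_def)

lemma rpoly_vars_one [simp]: "rpoly_vars 1 = {}"
  by (simp add: rpoly_vars_def)

lemma rpoly_vars_add: "rpoly_vars (p + q) \<subseteq> rpoly_vars p \<union> rpoly_vars q"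
  unfolding rpoly_vars_def using keys_add[of p q] by blast

lemma rpoly_vars_sum: "(\<And>i. i \<in> A \<Longrightarrow> rpoly_vars (p i) \<subseteq> V) \<Longrightarrow> rpoly_vars (\<Sum>i\<in>A. p i) \<subseteq> V"
proof (induction A rule: infinite_finite_induct)
  case (insert x F)
  then show ?case using rpoly_vars_add[of "p x" "sum p F"] by auto
qed auto

lemma rpoly_vars_mult: "rpoly_vars (p * q) \<subseteq> rpoly_vars p \<union> rpoly_vars q"
  unfolding rpoly_vars_def using keys_mult[of p q] by (fastforce simp: keys_add_nat)

lemma rpoly_vars_const [simp]: "rpoly_vars (rpoly_const c) = {}"
  by (simp add: rpoly_vars_def rpoly_const_def)

lemma rpoly_vars_const_mult: "rpoly_vars (rpoly_const c * q) \<subseteq> rpoly_vars q"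
  using rpoly_vars_mult[of "rpoly_const c" q] by simp

lemma rpoly_vars_var [simp]: "rpoly_vars (rpoly_var v) = {v}"
  by (simp add: rpoly_vars_def rpoly_var_def)

lemma rpoly_vars_power: "rpoly_vars p \<subseteq> V \<Longrightarrow> rpoly_vars (p ^ n) \<subseteq> V"
  by (induction n) (use rpoly_vars_mult in fastforce)+

lemma rpoly_vars_prod: "(\<And>i. i \<in> A \<Longrightarrow> rpoly_vars (p i) \<subseteq> V) \<Longrightarrow> rpoly_vars (\<Prod>i\<in>A. p i) \<subseteq> V"
  by (induction A rule: infinite_finite_induct) (use rpoly_vars_mult in fastforce)+

definition rpoly_subst :: "nat rpoly \<Rightarrow> (nat \<Rightarrow> 'w rpoly) \<Rightarrow> 'w rpoly" where
  "rpoly_subst P zz = (\<Sum>\<alpha>\<in>Poly_Mapping.keys P. rpoly_const (Poly_Mapping.lookup P \<alpha>) *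
      (\<Prod>v\<in>Poly_Mapping.keys \<alpha>. zz v ^ Poly_Mapping.lookup \<alpha> v))"

lemma rpoly_eval_subst: "rpoly_eval (rpoly_subst P zz) y = rpoly_eval P (\<lambda>v. rpoly_eval (zz v) y)"
  by (simp add: rpoly_subst_def rpoly_eval_sum rpoly_eval_mult rpoly_eval_prod rpoly_eval_power
      rpoly_eval_def[of P])

lemma keys_subset_rpoly_vars: "\<alpha> \<in> Poly_Mapping.keys P \<Longrightarrow> Poly_Mapping.keys \<alpha> \<subseteq> rpoly_vars P"
  by (auto simp: rpoly_vars_def)

lemma coeff_l1_norm_subst:
  assumes "\<And>v. v \<in> rpoly_vars P \<Longrightarrow> coeff_l1_norm (zz v) \<le> B" "1 \<le> B" "rpoly_deg_le P K"
  shows "coeff_l1_norm (rpoly_subst P zz) \<le> coeff_l1_norm P * B ^ K"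
proof -
  have mono: "coeff_l1_norm (\<Prod>v\<in>Poly_Mapping.keys \<alpha>. zz v ^ Poly_Mapping.lookup \<alpha> v) \<le> B ^ K"
    if a: "\<alpha> \<in> Poly_Mapping.keys P" for \<alpha>
  proof -
    have "coeff_l1_norm (\<Prod>v\<in>Poly_Mapping.keys \<alpha>. zz v ^ Poly_Mapping.lookup \<alpha> v)
        \<le> (\<Prod>v\<in>Poly_Mapping.keys \<alpha>. coeff_l1_norm (zz v) ^ Poly_Mapping.lookup \<alpha> v)"
      by (rule order_trans[OF coeff_l1_norm_prod], rule prod_mono)
        (simp add: coeff_l1_norm_nonneg coeff_l1_norm_power)
    also have "\<dots> \<le> (\<Prod>v\<in>Poly_Mapping.keys \<alpha>. B ^ Poly_Mapping.lookup \<alpha> v)"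
    proof (rule prod_mono)
      fix v assume "v \<in> Poly_Mapping.keys \<alpha>"
      then have "coeff_l1_norm (zz v) \<le> B" using assms(1) keys_subset_rpoly_vars[OF a] by blast
      then show "0 \<le> coeff_l1_norm (zz v) ^ Poly_Mapping.lookup \<alpha> v \<and>
          coeff_l1_norm (zz v) ^ Poly_Mapping.lookup \<alpha> v \<le> B ^ Poly_Mapping.lookup \<alpha> v"
        by (simp add: power_mono coeff_l1_norm_nonneg)
    qed
    also have "\<dots> = B ^ mono_deg \<alpha>" by (simp add: mono_deg_def power_sum)
    also have "\<dots> \<le> B ^ K"
      using assms(2,3) a by (intro power_increasing) (auto simp: rpoly_deg_le_def)
    finally show ?thesis .
  qed
  have "coeff_l1_norm (rpoly_subst P zz) \<le> (\<Sum>\<alpha>\<in>Poly_Mapping.keys P. \<bar>Poly_Mapping.lookup P \<alpha>\<bar> * B ^ K)"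
    unfolding rpoly_subst_def
    by (rule order_trans[OF coeff_l1_norm_sum], rule sum_mono, rule order_trans[OF coeff_l1_norm_const_mult])
      (simp add: mono mult_left_mono)
  also have "\<dots> = coeff_l1_norm P * B ^ K" by (simp add: coeff_l1_norm_def sum_distrib_right)
  finally show ?thesis .
qed

lemma rpoly_deg_le_subst:
  assumes "\<And>v. v \<in> rpoly_vars P \<Longrightarrow> rpoly_deg_le (zz v) 1" "rpoly_deg_le P K"
  shows "rpoly_deg_le (rpoly_subst P zz) K"
  unfolding rpoly_subst_def
proof (intro rpoly_deg_le_sum rpoly_deg_le_const_mult)
  fix \<alpha> assume a: "\<alpha> \<in> Poly_Mapping.keys P"
  have "rpoly_deg_le (\<Prod>v\<in>Poly_Mapping.keys \<alpha>. zz v ^ Poly_Mapping.lookup \<alpha> v)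
          (\<Sum>v\<in>Poly_Mapping.keys \<alpha>. Poly_Mapping.lookup \<alpha> v * 1)"
    using keys_subset_rpoly_vars[OF a] by (intro rpoly_deg_le_prod rpoly_deg_le_power assms(1)) auto
  then show "rpoly_deg_le (\<Prod>v\<in>Poly_Mapping.keys \<alpha>. zz v ^ Poly_Mapping.lookup \<alpha> v) K"
    using assms(2) a by (elim rpoly_deg_le_mono) (auto simp: rpoly_deg_le_def mono_deg_def)
qed

lemma rpoly_vars_subst:
  assumes "\<And>v. v \<in> rpoly_vars P \<Longrightarrow> rpoly_vars (zz v) \<subseteq> V"
  shows "rpoly_vars (rpoly_subst P zz) \<subseteq> V"
  unfolding rpoly_subst_def
  using assms keys_subset_rpoly_vars
  by (intro rpoly_vars_sum order_trans[OF rpoly_vars_const_mult] rpoly_vars_prod rpoly_vars_power) blast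

subsection \<open>The discrete cube and the Fourier expansion of sign functions\<close>

lemma cube_0: "cube 0 = {\<lambda>_. 0}"
  by (auto simp: cube_def)

lemma cube_Suc: "cube (Suc d) = (\<lambda>(x, s). x(d := s)) ` (cube d \<times> {-1, 1})"
proof (intro equalityI subsetI)
  fix y assume y: "y \<in> cube (Suc d)"
  have "y(d := 0) \<in> cube d" "y d \<in> {-1, 1}" "y = (y(d := 0))(d := y d)"
    using y by (auto simp: cube_def)
  then show "y \<in> (\<lambda>(x, s). x(d := s)) ` (cube d \<times> {-1, 1})"
    by (intro image_eqI[of _ _ "(y(d := 0), y d)"]) auto
qed (auto simp: cube_def less_Suc_eq)

lemma inj_on_cube_Suc: "inj_on (\<lambda>(x, s). x(d := s)) (cube d \<times> {-1, 1})"
proof (rule inj_onI, clarify)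
  fix x s x' s'
  assume a: "x \<in> cube d" "x' \<in> cube d" "x(d := s) = x'(d := s')"
  then have "x l = x' l" for l
    by (cases "l = d") (auto simp: cube_def dest: fun_cong[of _ _ l])
  then show "x = x' \<and> s = s'" using a(3) by (metis fun_upd_same ext)
qed

lemma finite_cube [simp]: "finite (cube d)"
  by (induction d) (auto simp: cube_0 cube_Suc)

lemma sum_cube_Suc:
  "(\<Sum>y\<in>cube (Suc d). f y) = (\<Sum>x\<in>cube d. f (x(d := 1)) + f (x(d := -1)))"
proof -
  have "(\<Sum>y\<in>cube (Suc d). f y) = (\<Sum>(x, s)\<in>cube d \<times> {-1, 1}. f (x(d := s)))"
    unfolding cube_Suc by (subst sum.reindex[OF inj_on_cube_Suc]) (simp add: case_prod_unfold)
  also have "\<dots> = (\<Sum>x\<in>cube d. \<Sum>s\<in>{-1, 1::real}. f (x(d := s)))"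
    by (rule sum.cartesian_product[symmetric])
  finally show ?thesis by (simp add: add.commute)
qed

lemma card_cube: "card (cube d) = 2 ^ d"
proof (induction d)
  case (Suc d)
  have "real (card (cube (Suc d))) = real (2 ^ Suc d)"
    using sum_cube_Suc[of "\<lambda>_. 1::real" d] Suc by simp
  then show ?case by (simp only: of_nat_eq_iff)
qed (simp add: cube_0)

lemma cube_coord: "x \<in> cube d \<Longrightarrow> l < d \<Longrightarrow> x l = 1 \<or> x l = -1"
  by (auto simp: cube_def)

lemma cube_coord_sq: "x \<in> cube d \<Longrightarrow> l < d \<Longrightarrow> x l * x l = 1"
  using cube_coord by fastforce

definition cube_char :: "nat set \<Rightarrow> (nat \<Rightarrow> real) \<Rightarrow> real" where
  "cube_char T x = (\<Prod>v\<in>T. x v)"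

definition cube_flip :: "nat \<Rightarrow> (nat \<Rightarrow> real) \<Rightarrow> (nat \<Rightarrow> real)" where
  "cube_flip v x = x(v := - x v)"

lemma sum_cube_flip: "v < d \<Longrightarrow> (\<Sum>x\<in>cube d. f (cube_flip v x)) = (\<Sum>x\<in>cube d. f x)"
  by (rule sum.reindex_bij_witness[of _ "cube_flip v" "cube_flip v"]) (auto simp: cube_flip_def cube_def)

lemma cube_char_flip:
  "finite T \<Longrightarrow> cube_char T (cube_flip v x) = (if v \<in> T then - cube_char T x else cube_char T x)"
  unfolding cube_char_def cube_flip_def
  by (auto simp: prod.remove[of T v] intro!: prod.cong)

lemma cube_char_sq: "x \<in> cube d \<Longrightarrow> T \<subseteq> {..<d} \<Longrightarrow> cube_char T x * cube_char T x = 1"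
  unfolding cube_char_def prod.distrib[symmetric] by (intro prod.neutral) (auto intro: cube_coord_sq)

lemma sum_cube_char_orth:
  assumes "S \<subseteq> {..<d}" "T \<subseteq> {..<d}" "S \<noteq> T"
  shows "(\<Sum>x\<in>cube d. cube_char S x * cube_char T x) = 0"
proof -
  obtain v where v: "v \<in> S \<and> v \<notin> T \<or> v \<in> T \<and> v \<notin> S" using assms(3) by blast
  have fin: "finite S" "finite T" using assms(1,2) finite_subset by auto
  have "(\<Sum>x\<in>cube d. cube_char S x * cube_char T x)
      = (\<Sum>x\<in>cube d. cube_char S (cube_flip v x) * cube_char T (cube_flip v x))"
    using v assms by (intro sum_cube_flip[symmetric]) auto
  also have "\<dots> = - (\<Sum>x\<in>cube d. cube_char S x * cube_char T x)"
    using v fin by (auto simp: cube_char_flip sum_negf)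
  finally show ?thesis by simp
qed

lemma multilinear_lookup:
  "multilinear P \<Longrightarrow> \<alpha> \<in> Poly_Mapping.keys P \<Longrightarrow>
     Poly_Mapping.lookup \<alpha> v = (if v \<in> Poly_Mapping.keys \<alpha> then 1 else 0)"
  unfolding multilinear_def by (metis in_keys_iff le_antisym less_one not_le)

lemma inj_on_keys_multilinear: "multilinear P \<Longrightarrow> inj_on Poly_Mapping.keys (Poly_Mapping.keys P)"
  by (rule inj_onI, rule poly_mapping_eqI) (metis multilinear_lookup)

lemma rpoly_eval_multilinear:
  "multilinear P \<Longrightarrow>
     rpoly_eval P x = (\<Sum>\<alpha>\<in>Poly_Mapping.keys P. Poly_Mapping.lookup P \<alpha> * cube_char (Poly_Mapping.keys \<alpha>) x)"
  unfolding rpoly_eval_def cube_char_def by (intro sum.cong refl) (auto simp: multilinear_lookup)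

lemma sum_coeff_sq_multilinear_ext_sign:
  assumes ext: "is_multilinear_ext d g P" and sign: "\<forall>x\<in>cube d. g x \<in> {-1, 1}"
  shows "(\<Sum>\<alpha>\<in>Poly_Mapping.keys P. (Poly_Mapping.lookup P \<alpha>)^2) = 1"
proof -
  let ?c = "Poly_Mapping.lookup P" and ?A = "Poly_Mapping.keys P" and ?\<chi> = "\<lambda>\<alpha>. cube_char (Poly_Mapping.keys \<alpha>)"
  have ml: "multilinear P" and ev: "\<forall>x\<in>cube d. rpoly_eval P x = g x"
    using ext by (auto simp: is_multilinear_ext_def)
  have ks: "Poly_Mapping.keys \<alpha> \<subseteq> {..<d}" if "\<alpha> \<in> ?A" for \<alpha>
    using ext keys_subset_rpoly_vars[OF that] by (auto simp: is_multilinear_ext_def)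
  have diag: "(\<Sum>\<beta>\<in>?A. ?c \<beta> * (\<Sum>x\<in>cube d. ?\<chi> \<alpha> x * ?\<chi> \<beta> x)) = ?c \<alpha> * 2 ^ d" if a: "\<alpha> \<in> ?A" for \<alpha>
  proof -
    have off: "(\<Sum>x\<in>cube d. ?\<chi> \<alpha> x * ?\<chi> \<beta> x) = 0" if "\<beta> \<in> ?A - {\<alpha>}" for \<beta>
      using that a inj_on_keys_multilinear[OF ml] ks
      by (intro sum_cube_char_orth) (auto dest: inj_onD)
    have "(\<Sum>\<beta>\<in>?A. ?c \<beta> * (\<Sum>x\<in>cube d. ?\<chi> \<alpha> x * ?\<chi> \<beta> x)) = ?c \<alpha> * (\<Sum>x\<in>cube d. ?\<chi> \<alpha> x * ?\<chi> \<alpha> x)"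
      by (simp add: sum.remove[OF _ a] off)
    also have "\<dots> = ?c \<alpha> * 2 ^ d" using cube_char_sq[OF _ ks[OF a]] by (simp add: card_cube)
    finally show ?thesis .
  qed
  have "(\<Sum>x\<in>cube d. (rpoly_eval P x)^2) = (\<Sum>x\<in>cube d. 1)"
    by (rule sum.cong) (use ev sign in auto)
  then have "2 ^ d = (\<Sum>x\<in>cube d. (rpoly_eval P x)^2)"
    by (simp add: card_cube)
  also have "\<dots> = (\<Sum>\<alpha>\<in>?A. ?c \<alpha> * (\<Sum>\<beta>\<in>?A. ?c \<beta> * (\<Sum>x\<in>cube d. ?\<chi> \<alpha> x * ?\<chi> \<beta> x)))"
    by (simp add: rpoly_eval_multilinear[OF ml] power2_eq_square sum_product sum_distrib_left
        sum.swap[of _ "cube d"] mult_ac)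
  also have "\<dots> = (\<Sum>\<alpha>\<in>?A. (?c \<alpha>)^2) * 2 ^ d"
    by (simp add: diag sum_distrib_right power2_eq_square mult.assoc)
  finally show ?thesis by simp
qed

lemma card_subsets_card_le:
  assumes "d \<ge> 1"
  shows "card {T. T \<subseteq> {..<d} \<and> card T \<le> K} \<le> (K + 1) * d ^ K"
proof -
  have "{T. T \<subseteq> {..<d} \<and> card T \<le> K} = (\<Union>s\<in>{..K}. {T. T \<subseteq> {..<d} \<and> card T = s})" by auto
  then have "card {T. T \<subseteq> {..<d} \<and> card T \<le> K} \<le> (\<Sum>s\<in>{..K}. card {T. T \<subseteq> {..<d} \<and> card T = s})"
    by (simp add: card_UN_le)
  also have "\<dots> = (\<Sum>s\<in>{..K}. d choose s)" by (simp add: n_subsets)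
  also have "\<dots> \<le> (\<Sum>s\<in>{..K}. d ^ K)"
  proof (rule sum_mono)
    fix s assume "s \<in> {..K}"
    then have "d choose s \<le> d ^ s" "d ^ s \<le> d ^ K" using assms
      by (cases "s \<le> d", auto simp: binomial_le_pow power_increasing binomial_eq_0)
    then show "d choose s \<le> d ^ K" by linarith
  qed
  finally show ?thesis by simp
qed

lemma coeff_l1_norm_multilinear_ext_sign:
  assumes ext: "is_multilinear_ext d g P" and sign: "\<forall>x\<in>cube d. g x \<in> {-1, 1}"
    and deg: "rpoly_deg_le P K" and d: "d \<ge> 1"
  shows "coeff_l1_norm P \<le> sqrt (real ((K + 1) * d ^ K))"
proof -
  let ?A = "Poly_Mapping.keys P"
  have ml: "multilinear P" using ext by (simp add: is_multilinear_ext_def)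
  have "card ?A = card (Poly_Mapping.keys ` ?A)"
    using card_image[OF inj_on_keys_multilinear[OF ml]] by simp
  also have "\<dots> \<le> card {T. T \<subseteq> {..<d} \<and> card T \<le> K}"
  proof (rule card_mono)
    show "Poly_Mapping.keys ` ?A \<subseteq> {T. T \<subseteq> {..<d} \<and> card T \<le> K}"
    proof (rule image_subsetI)
      fix \<alpha> assume a: "\<alpha> \<in> ?A"
      have "card (Poly_Mapping.keys \<alpha>) = mono_deg \<alpha>"
        by (simp add: mono_deg_def multilinear_lookup[OF ml a])
      then show "Poly_Mapping.keys \<alpha> \<in> {T. T \<subseteq> {..<d} \<and> card T \<le> K}"
        using deg ext keys_subset_rpoly_vars[OF a] a by (auto simp: rpoly_deg_le_def is_multilinear_ext_def)
    qed
  qed simp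
  also have "\<dots> \<le> (K + 1) * d ^ K" by (rule card_subsets_card_le[OF d])
  finally have card: "real (card ?A) \<le> real ((K + 1) * d ^ K)" by (simp only: of_nat_le_iff)
  have "(coeff_l1_norm P)^2 \<le> (\<Sum>\<alpha>\<in>?A. \<bar>Poly_Mapping.lookup P \<alpha>\<bar>^2) * real (card ?A)"
    unfolding coeff_l1_norm_def by (rule sum_squared_le_sum_of_squares)
  also have "\<dots> \<le> real ((K + 1) * d ^ K)"
    using sum_coeff_sq_multilinear_ext_sign[OF ext sign] card by simp
  finally show ?thesis using coeff_l1_norm_nonneg by (simp add: real_le_rsqrt)
qed

subsection \<open>A Khintchine inequality on the cube\<close>

lemma sum_lessThan_Suc_fun_upd:
  "(\<Sum>l<Suc d. a l * (x(d := t)) l) = (\<Sum>l<d. a l * x l) + a d * t"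
  by simp

lemma sum_cube_linear_sq: "(\<Sum>x\<in>cube d. (\<Sum>l<d. a l * x l)^2) = 2 ^ d * (\<Sum>l<d. (a l)^2)"
proof (induction d)
  case (Suc d)
  have "(\<Sum>x\<in>cube (Suc d). (\<Sum>l<Suc d. a l * x l)^2)
      = (\<Sum>x\<in>cube d. 2 * (\<Sum>l<d. a l * x l)^2 + 2 * (a d)^2)"
    by (simp add: sum_cube_Suc sum_lessThan_Suc_fun_upd power2_eq_square algebra_simps)
  also have "\<dots> = 2 * (\<Sum>x\<in>cube d. (\<Sum>l<d. a l * x l)^2) + 2 ^ d * 2 * (a d)^2"
    by (simp add: sum.distrib sum_distrib_left card_cube)
  finally show ?case using Suc by (simp add: algebra_simps)
qed (simp add: cube_0)

lemma sum_cube_linear_pow4: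
  "(\<Sum>x\<in>cube d. (\<Sum>l<d. a l * x l)^4) \<le> 3 * 2 ^ d * (\<Sum>l<d. (a l)^2)^2"
proof (induction d)
  case (Suc d)
  let ?S = "\<lambda>x. \<Sum>l<d. a l * x l" and ?s = "\<Sum>l<d. (a l)^2" and ?b = "(a d)^2"
  have "(\<Sum>x\<in>cube (Suc d). (\<Sum>l<Suc d. a l * x l)^4) = (\<Sum>x\<in>cube d. (?S x + a d)^4 + (?S x - a d)^4)"
    by (simp add: sum_cube_Suc sum_lessThan_Suc_fun_upd)
  also have "\<dots> = (\<Sum>x\<in>cube d. 2 * (?S x)^4 + 12 * ?b * (?S x)^2 + 2 * ?b^2)"
    by (intro sum.cong refl) algebra
  also have "\<dots> = 2 * (\<Sum>x\<in>cube d. (?S x)^4) + 12 * ?b * (\<Sum>x\<in>cube d. (?S x)^2) + 2 ^ d * 2 * ?b^2"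
    by (simp add: sum.distrib sum_distrib_left card_cube)
  also have "\<dots> \<le> 2 * (3 * 2 ^ d * ?s^2) + 12 * ?b * (2 ^ d * ?s) + 2 ^ d * 2 * ?b^2"
    unfolding sum_cube_linear_sq using Suc.IH by simp
  also have "\<dots> = 3 * 2 ^ Suc d * (?s + ?b)^2 - 4 * 2 ^ d * ?b^2"
    by (simp add: power2_eq_square algebra_simps)
  also have "\<dots> \<le> 3 * 2 ^ Suc d * (?s + ?b)^2"
    by simp
  finally show ?case by simp
qed (simp add: cube_0)

lemma sq_le_threshold_split:
  fixes S \<tau> :: real
  assumes "\<tau> > 0"
  shows "S^2 \<le> \<tau> * \<bar>S\<bar> + S^4 / \<tau>^2"
proof (cases "\<bar>S\<bar> \<le> \<tau>")
  case True
  then have "S^2 \<le> \<tau> * \<bar>S\<bar>"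
    by (metis abs_ge_zero mult_right_mono power2_abs power2_eq_square)
  then show ?thesis by (simp add: add_increasing2)
next
  case False
  then have "\<tau>^2 \<le> S^2" using assms by (metis abs_le_square_iff abs_of_pos less_imp_le not_le)
  then have "S^2 * \<tau>^2 \<le> S^4"
    by (metis mult_left_mono numeral_Bit0 power_add zero_le_power2)
  then have "S^2 \<le> S^4 / \<tau>^2" using assms by (simp add: pos_le_divide_eq)
  then show ?thesis using assms by (simp add: add_increasing)
qed

text \<open>The second and fourth moments control the first one: with \<open>\<tau>\<^sup>2 = 6 E S\<^sup>2\<close>,
  \<open>E S\<^sup>2 \<le> \<tau> E\<bar>S\<bar> + E S\<^sup>4 / \<tau>\<^sup>2 \<le> \<tau> E\<bar>S\<bar> + E S\<^sup>2 / 2\<close>.\<close>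

lemma khintchine_cube:
  fixes a :: "nat \<Rightarrow> real"
  shows "2 ^ d * sqrt (\<Sum>l<d. (a l)^2) / 5 \<le> (\<Sum>x\<in>cube d. \<bar>\<Sum>l<d. a l * x l\<bar>)"
proof (cases "(\<Sum>l<d. (a l)^2) = 0")
  case False
  let ?S = "\<lambda>x. \<Sum>l<d. a l * x l" and ?s = "\<Sum>l<d. (a l)^2" and ?N = "(2::real) ^ d"
  have s: "?s > 0" using False sum_nonneg[of "{..<d}" "\<lambda>l. (a l)^2"] by simp
  define \<tau> where "\<tau> = sqrt (6 * ?s)"
  have \<tau>: "\<tau> > 0" "\<tau>^2 = 6 * ?s" using s by (auto simp: \<tau>_def)
  have "?N * ?s \<le> (\<Sum>x\<in>cube d. \<tau> * \<bar>?S x\<bar> + (?S x)^4 / \<tau>^2)"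
    unfolding sum_cube_linear_sq[symmetric] by (intro sum_mono sq_le_threshold_split \<tau>)
  also have "\<dots> \<le> \<tau> * (\<Sum>x\<in>cube d. \<bar>?S x\<bar>) + 3 * ?N * ?s^2 / \<tau>^2"
    using divide_right_mono[OF sum_cube_linear_pow4[of a d], of "\<tau>^2"]
    by (simp add: sum.distrib sum_distrib_left sum_divide_distrib[symmetric])
  also have "3 * ?N * ?s^2 / \<tau>^2 = ?N * ?s / 2"
    unfolding \<tau>(2) using s by (simp add: power2_eq_square)
  finally have "?N * ?s / (2 * \<tau>) \<le> (\<Sum>x\<in>cube d. \<bar>?S x\<bar>)"
    using \<tau> by (simp add: field_simps)
  moreover have "?N * ?s / (2 * \<tau>) = ?N * sqrt ?s / (2 * sqrt 6)"
  proof -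
    have "?s = sqrt ?s * sqrt ?s" "\<tau> = sqrt 6 * sqrt ?s"
      using s by (simp_all add: \<tau>_def real_sqrt_mult)
    then show ?thesis using s by (simp add: field_simps)
  qed
  moreover have "?N * sqrt ?s / 5 \<le> ?N * sqrt ?s / (2 * sqrt 6)"
  proof -
    have "sqrt 6 \<le> sqrt ((5/2::real)^2)" by (intro real_sqrt_le_mono) (simp add: power2_eq_square)
    then have "2 * sqrt 6 \<le> (5::real)" by simp
    then show ?thesis using s by (intro divide_left_mono) auto
  qed
  ultimately show ?thesis by simp
qed (simp add: sum_nonneg)

subsection \<open>The weight set \<open>W\<^sub>d\<^sub>,\<^sub>k\<close> and its symmetries\<close>

lemma Wdk_coord: "w \<in> Wdk d k \<Longrightarrow> w l = -1 \<or> w l = 0 \<or> w l = 1"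
  unfolding Wdk_def by (cases "l < d") auto

lemma Wdk_coord_ge: "w \<in> Wdk d k \<Longrightarrow> d \<le> l \<Longrightarrow> w l = 0"
  unfolding Wdk_def by auto

lemma Wdk_abs_coord_le_1: "w \<in> Wdk d k \<Longrightarrow> \<bar>w l\<bar> \<le> 1"
  using Wdk_coord[of w d k l] by auto

lemma Wdk_coord_sq: "w \<in> Wdk d k \<Longrightarrow> (w l)^2 = \<bar>w l\<bar>"
  using Wdk_coord[of w d k l] by auto

lemma Wdk_sum_abs: "w \<in> Wdk d k \<Longrightarrow> (\<Sum>l<d. \<bar>w l\<bar>) = real k"
  unfolding Wdk_def by auto

lemma finite_Wdk [simp]: "finite (Wdk d k)"
proof -
  have "Wdk d k \<subseteq> (\<lambda>f l. if l < d then f l else 0) ` PiE {..<d} (\<lambda>_. {-1, 0, 1::real})"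
  proof
    fix w assume w: "w \<in> Wdk d k"
    have "w = (\<lambda>l. if l < d then restrict w {..<d} l else 0)"
      using Wdk_coord_ge[OF w] by force
    moreover have "restrict w {..<d} \<in> PiE {..<d} (\<lambda>_. {-1, 0, 1::real})"
      using w by (auto simp: Wdk_def)
    ultimately show "w \<in> (\<lambda>f l. if l < d then f l else 0) ` PiE {..<d} (\<lambda>_. {-1, 0, 1::real})"
      by blast
  qed
  then show ?thesis by (rule finite_subset) (intro finite_imageI finite_PiE; simp)
qed

lemma Wdk_nonempty: "k \<le> d \<Longrightarrow> Wdk d k \<noteq> {}"
proof -
  assume kd: "k \<le> d"
  let ?w = "\<lambda>l. if l < k then (1::real) else 0"
  have "(\<Sum>l<d. \<bar>?w l\<bar>) = (\<Sum>l<k. 1)"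
    using kd by (intro sum.mono_neutral_cong_right) auto
  then have "?w \<in> Wdk d k" using kd by (auto simp: Wdk_def)
  then show ?thesis by blast
qed

lemma Wdk_sign_flip: "z \<in> cube d \<Longrightarrow> w \<in> Wdk d k \<Longrightarrow> (\<lambda>m. w m * z m) \<in> Wdk d k"
proof -
  assume z: "z \<in> cube d" and w: "w \<in> Wdk d k"
  have "\<bar>w m * z m\<bar> = \<bar>w m\<bar>" if "m < d" for m
    using cube_coord[OF z that] by auto
  then have "(\<Sum>m<d. \<bar>w m * z m\<bar>) = real k"
    using Wdk_sum_abs[OF w] by simp
  moreover have "w l * z l \<in> {-1, 0, 1}" if "l < d" for l
    using Wdk_coord[OF w, of l] cube_coord[OF z that] by auto
  ultimately show ?thesis
    using Wdk_coord_ge[OF w] by (auto simp: Wdk_def)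
qed

lemma sum_Wdk_sign_flip:
  assumes "z \<in> cube d"
  shows "(\<Sum>w\<in>Wdk d k. h (\<lambda>m. w m * z m)) = (\<Sum>w\<in>Wdk d k. h w)"
proof -
  have flip_flip: "(\<lambda>m. (w m * z m) * z m) = w" if "w \<in> Wdk d k" for w
  proof
    fix m
    show "w m * z m * z m = w m"
      using cube_coord_sq[OF assms] Wdk_coord_ge[OF that] by (cases "m < d") (simp_all add: mult.assoc)
  qed
  show ?thesis
    by (rule sum.reindex_bij_witness[of _ "\<lambda>w m. w m * z m" "\<lambda>w m. w m * z m"])
      (auto simp: flip_flip Wdk_sign_flip[OF assms])
qed

lemma sum_lessThan_transpose:
  assumes "l < d" "l' < d"
  shows "(\<Sum>m<d. f (Transposition.transpose l l' m)) = (\<Sum>m<d. f m)"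
  using assms by (intro sum.reindex_bij_betw[of _ "{..<d}"]) simp

lemma Wdk_swap:
  assumes "l < d" "l' < d" and w: "w \<in> Wdk d k"
  shows "w \<circ> Transposition.transpose l l' \<in> Wdk d k"
  unfolding Wdk_def
proof (intro CollectI conjI allI impI)
  fix m
  show "(w \<circ> Transposition.transpose l l') m \<in> {-1, 0, 1}"
    using Wdk_coord[OF w, of "Transposition.transpose l l' m"] by auto
  assume "d \<le> m"
  then show "(w \<circ> Transposition.transpose l l') m = 0"
    using assms Wdk_coord_ge[OF w] by (simp add: transpose_def)
next
  show "(\<Sum>m<d. \<bar>(w \<circ> Transposition.transpose l l') m\<bar>) = real k"
    using sum_lessThan_transpose[OF assms(1,2), of "\<lambda>m. \<bar>w m\<bar>"] Wdk_sum_abs[OF w] by simp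
qed

lemma sum_Wdk_swap:
  assumes "l < d" "l' < d"
  shows "(\<Sum>w\<in>Wdk d k. h (w \<circ> Transposition.transpose l l')) = (\<Sum>w\<in>Wdk d k. h w)"
  by (rule sum.reindex_bij_witness[of _ "\<lambda>w. w \<circ> Transposition.transpose l l'"
        "\<lambda>w. w \<circ> Transposition.transpose l l'"])
    (auto simp: Wdk_swap[OF assms] comp_assoc)

lemma sum_Wdk_abs_coord:
  assumes "l < d"
  shows "(\<Sum>w\<in>Wdk d k. \<bar>w l\<bar>) = real k / real d * real (card (Wdk d k))"
proof -
  have "(\<Sum>w\<in>Wdk d k. \<bar>w l'\<bar>) = (\<Sum>w\<in>Wdk d k. \<bar>w l\<bar>)" if "l' < d" for l'
    using sum_Wdk_swap[OF assms that, of "\<lambda>w. \<bar>w l'\<bar>"] by simp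
  then have "real d * (\<Sum>w\<in>Wdk d k. \<bar>w l\<bar>) = (\<Sum>l'<d. \<Sum>w\<in>Wdk d k. \<bar>w l'\<bar>)"
    by simp
  also have "\<dots> = (\<Sum>w\<in>Wdk d k. \<Sum>l'<d. \<bar>w l'\<bar>)" by (rule sum.swap)
  also have "\<dots> = real k * real (card (Wdk d k))" by (simp add: Wdk_sum_abs)
  finally show ?thesis using assms by (simp add: field_simps)
qed

definition vote_correlation :: "nat \<Rightarrow> nat \<Rightarrow> real" where
  "vote_correlation d k =
     (\<Sum>w\<in>Wdk d k. w 0 * sgn (\<Sum>m<d. w m)) / real (card (Wdk d k))"

lemma sum_Wdk_coord_vote:
  assumes z: "z \<in> cube d" and l: "l < d"
  shows "(\<Sum>w\<in>Wdk d k. w l * sgn (\<Sum>m<d. w m * z m)) = z l * (\<Sum>w\<in>Wdk d k. w 0 * sgn (\<Sum>m<d. w m))"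
proof -
  have "(\<Sum>w\<in>Wdk d k. w l * sgn (\<Sum>m<d. w m * z m))
      = (\<Sum>w\<in>Wdk d k. (w l * z l) * sgn (\<Sum>m<d. (w m * z m) * z m))"
    by (rule sum_Wdk_sign_flip[OF z, symmetric])
  also have "\<dots> = z l * (\<Sum>w\<in>Wdk d k. w l * sgn (\<Sum>m<d. w m))"
    using cube_coord_sq[OF z] by (simp add: sum_distrib_left mult.assoc mult.commute[of "z l"])
  also have "(\<Sum>w\<in>Wdk d k. w l * sgn (\<Sum>m<d. w m)) = (\<Sum>w\<in>Wdk d k. w 0 * sgn (\<Sum>m<d. w m))"
  proof -
    have "(\<Sum>m<d. w (Transposition.transpose 0 l m)) = (\<Sum>m<d. w m)" for w :: "nat \<Rightarrow> real"
      using l by (intro sum.reindex_bij_betw[of _ "{..<d}"]) simp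
    then show ?thesis
      using sum_Wdk_swap[where h = "\<lambda>w. w 0 * sgn (\<Sum>m<d. w m)" and l = 0 and l' = l and k = k] l
      by simp
  qed
  finally show ?thesis .
qed

lemma sum_Wdk_vote_eq_abs_sum:
  assumes "0 < d"
  shows "real d * (\<Sum>w\<in>Wdk d k. w 0 * sgn (\<Sum>m<d. w m)) = (\<Sum>w\<in>Wdk d k. \<bar>\<Sum>m<d. w m\<bar>)"
proof -
  define one where "one = (\<lambda>m. if m < d then 1 else 0 :: real)"
  have one: "one \<in> cube d" by (simp add: one_def cube_def)
  have inner: "(\<Sum>w\<in>Wdk d k. w l * sgn (\<Sum>m<d. w m)) = (\<Sum>w\<in>Wdk d k. w 0 * sgn (\<Sum>m<d. w m))"
    if "l < d" for l
  proof -
    have "(\<Sum>m<d. w m * one m) = (\<Sum>m<d. w m)" for w :: "nat \<Rightarrow> real"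
      by (rule sum.cong) (auto simp: one_def)
    moreover have "one l = 1" using that by (simp add: one_def)
    ultimately show ?thesis using sum_Wdk_coord_vote[OF one that, where k = k] by simp
  qed
  have "(\<Sum>l<d. \<Sum>w\<in>Wdk d k. w l * sgn (\<Sum>m<d. w m))
      = (\<Sum>l<d. \<Sum>w\<in>Wdk d k. w 0 * sgn (\<Sum>m<d. w m))"
    by (rule sum.cong[OF refl], rule inner) simp
  then have "real d * (\<Sum>w\<in>Wdk d k. w 0 * sgn (\<Sum>m<d. w m))
      = (\<Sum>l<d. \<Sum>w\<in>Wdk d k. w l * sgn (\<Sum>m<d. w m))"
    by simp
  also have "\<dots> = (\<Sum>w\<in>Wdk d k. (\<Sum>l<d. w l) * sgn (\<Sum>m<d. w m))"
    by (subst sum.swap) (simp add: sum_distrib_right)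
  finally show ?thesis by (simp add: abs_sgn)
qed

lemma sum_Wdk_abs_sum_ge:
  "real (card (Wdk d k)) * sqrt k / 5 \<le> (\<Sum>w\<in>Wdk d k. \<bar>\<Sum>m<d. w m\<bar>)"
proof -
  let ?W = "Wdk d k"
  have flip: "(\<Sum>w\<in>?W. \<bar>\<Sum>m<d. w m * z m\<bar>) = (\<Sum>w\<in>?W. \<bar>\<Sum>m<d. w m\<bar>)" if z: "z \<in> cube d" for z
    using sum_Wdk_sign_flip[OF z, where k = k and h = "\<lambda>w. \<bar>\<Sum>m<d. w m * z m\<bar>"] cube_coord_sq[OF z]
    by (simp add: mult.assoc)
  have "(\<Sum>z\<in>cube d. \<Sum>w\<in>?W. \<bar>\<Sum>m<d. w m * z m\<bar>) = (\<Sum>z\<in>cube d. \<Sum>w\<in>?W. \<bar>\<Sum>m<d. w m\<bar>)"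
    by (rule sum.cong[OF refl]) (simp add: flip)
  then have "2 ^ d * (\<Sum>w\<in>?W. \<bar>\<Sum>m<d. w m\<bar>) = (\<Sum>z\<in>cube d. \<Sum>w\<in>?W. \<bar>\<Sum>m<d. w m * z m\<bar>)"
    by (simp add: card_cube)
  also have "\<dots> = (\<Sum>w\<in>?W. \<Sum>z\<in>cube d. \<bar>\<Sum>m<d. w m * z m\<bar>)" by (rule sum.swap)
  also have "\<dots> \<ge> (\<Sum>w\<in>?W. 2 ^ d * sqrt k / 5)"
  proof (rule sum_mono)
    fix w assume w: "w \<in> ?W"
    have "(\<Sum>l<d. (w l)^2) = real k" using Wdk_sum_abs[OF w] by (simp add: Wdk_coord_sq[OF w])
    then show "2 ^ d * sqrt k / 5 \<le> (\<Sum>z\<in>cube d. \<bar>\<Sum>m<d. w m * z m\<bar>)"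
      using khintchine_cube[of d w] by simp
  qed
  finally show ?thesis by simp
qed

lemma vote_correlation_ge:
  assumes "1 \<le> k" "k \<le> d"
  shows "sqrt k / 5 \<le> real d * vote_correlation d k"
proof -
  have "card (Wdk d k) > 0" using Wdk_nonempty[OF assms(2)] by (simp add: card_gt_0_iff)
  then show ?thesis
    using sum_Wdk_vote_eq_abs_sum[of d k] sum_Wdk_abs_sum_ge[of d k] assms
    by (simp add: vote_correlation_def field_simps)
qed

lemma vote_correlation_le:
  assumes "0 < d"
  shows "vote_correlation d k \<le> real k / real d"
proof -
  have "(\<Sum>w\<in>Wdk d k. w 0 * sgn (\<Sum>m<d. w m)) \<le> (\<Sum>w\<in>Wdk d k. \<bar>w 0\<bar>)"
  proof (intro sum_mono)
    fix w :: "nat \<Rightarrow> real"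
    show "w 0 * sgn (\<Sum>m<d. w m) \<le> \<bar>w 0\<bar>"
      by (cases "\<Sum>m<d. w m" "0::real" rule: linorder_cases) auto
  qed
  also have "\<dots> = real k / real d * real (card (Wdk d k))"
    by (rule sum_Wdk_abs_coord[OF assms])
  finally show ?thesis
    by (cases "card (Wdk d k) = 0") (simp_all add: vote_correlation_def divide_le_eq)
qed

text \<open>Since \<open>w \<bullet> z \<equiv> \<Sum>\<^sub>l \<bar>w\<^sub>l\<bar> = k (mod 2)\<close>, the inner product is an odd integer.\<close>

lemma Wdk_inner_odd_bounds:
  assumes w: "w \<in> Wdk d k" and z: "\<And>l. l < d \<Longrightarrow> z l \<in> {-1, 1}" and k: "odd k"
  shows "1 \<le> \<bar>\<Sum>l<d. w l * z l\<bar>" "\<bar>\<Sum>l<d. w l * z l\<bar> \<le> real k"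
proof -
  let ?S = "\<Sum>l<d. w l * z l"
  have "\<bar>?S\<bar> \<le> (\<Sum>l<d. \<bar>w l * z l\<bar>)" by (rule sum_abs)
  also have "\<dots> = (\<Sum>l<d. \<bar>w l\<bar>)"
  proof (intro sum.cong refl)
    fix l assume "l \<in> {..<d}"
    then have "\<bar>z l\<bar> = 1" using z by fastforce
    then show "\<bar>w l * z l\<bar> = \<bar>w l\<bar>" by (simp add: abs_mult)
  qed
  also have "\<dots> = real k" by (rule Wdk_sum_abs[OF w])
  finally show "\<bar>?S\<bar> \<le> real k" .
  have "(w l * z l + \<bar>w l\<bar>) / 2 \<in> \<int>" if "l < d" for l
    using Wdk_coord[OF w, of l] z[OF that] by auto
  then have "(\<Sum>l<d. (w l * z l + \<bar>w l\<bar>) / 2) \<in> \<int>" by (intro Ints_sum) auto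
  moreover have "(\<Sum>l<d. (w l * z l + \<bar>w l\<bar>) / 2) = (?S + real k) / 2"
    using Wdk_sum_abs[OF w] by (simp add: sum.distrib sum_divide_distrib[symmetric])
  ultimately obtain M :: int where "(?S + real k) / 2 = of_int M" by (metis Ints_cases)
  then have S: "?S = of_int (2 * M - int k)" by simp
  have "2 * M - int k \<noteq> 0" using k by presburger
  then have "1 \<le> \<bar>2 * M - int k\<bar>" by linarith
  then show "1 \<le> \<bar>?S\<bar>" unfolding S by (metis of_int_1_le_iff of_int_abs)
qed

lemma sgn_Wdk_inner_odd:
  assumes "w \<in> Wdk d k" "\<And>l. l < d \<Longrightarrow> z l \<in> {-1, 1}" "odd k"
  shows "sgn (\<Sum>l<d. w l * z l) \<in> {-1, 1}"
  using Wdk_inner_odd_bounds[where z = z, OF assms] by (auto simp: sgn_real_def)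

subsection \<open>A Bernstein-type tail bound for uniform product spaces\<close>

lemma exp_le_quadratic: "\<bar>u::real\<bar> \<le> 1 \<Longrightarrow> exp u \<le> 1 + u + u^2"
proof (cases "u \<ge> 0")
  case False
  assume "\<bar>u\<bar> \<le> 1"
  then have v: "0 \<le> - u" "- u \<le> 1" using False by auto
  have "exp u = 1 / exp (- u)" by (simp add: exp_minus field_simps)
  also have "\<dots> \<le> 1 / (1 - u)" using v exp_ge_add_one_self[of "- u"] by (intro divide_left_mono) auto
  also have "\<dots> \<le> 1 + u + u^2"
    using v mult_nonpos_nonneg[of u "u * u"]
    by (simp add: divide_le_eq algebra_simps power2_eq_square)
  finally show ?thesis .
qed (use exp_bound in auto)

lemma sum_PiE_prod_subset:
  fixes h :: "'b \<Rightarrow> real"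
  assumes "finite I" "finite B" "J \<subseteq> I"
  shows "(\<Sum>W\<in>PiE I (\<lambda>_. B). \<Prod>i\<in>J. h (W i)) = (\<Sum>w\<in>B. h w) ^ card J * real (card B) ^ (card I - card J)"
proof -
  define f where "f i w = (if i \<in> J then h w else 1)" for i w
  have "(\<Sum>W\<in>PiE I (\<lambda>_. B). \<Prod>i\<in>J. h (W i)) = (\<Sum>W\<in>PiE I (\<lambda>_. B). \<Prod>i\<in>I. f i (W i))"
    using assms by (intro sum.cong refl prod.mono_neutral_cong_left) (auto simp: f_def)
  also have "\<dots> = (\<Prod>i\<in>I. \<Sum>w\<in>B. f i w)"
    by (rule prod_sum_PiE[symmetric]) (use assms in auto)
  also have "\<dots> = (\<Prod>i\<in>I. if i \<in> J then (\<Sum>w\<in>B. h w) else real (card B))"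
    by (rule prod.cong) (auto simp: f_def)
  also have "\<dots> = (\<Prod>i\<in>J. \<Sum>w\<in>B. h w) * (\<Prod>i\<in>I - J. real (card B))"
  proof -
    have "I \<inter> J = J" "I \<inter> - J = I - J" using assms(3) by auto
    then show ?thesis by (simp add: prod.If_cases[OF assms(1)])
  qed
  finally show ?thesis
    using assms by (simp add: card_Diff_subset finite_subset)
qed

lemma sum_exp_le_exp_mean_var:
  fixes g :: "'b \<Rightarrow> real"
  assumes "finite B" "B \<noteq> {}" "\<And>w. w \<in> B \<Longrightarrow> \<bar>g w\<bar> \<le> 1"
    and "(\<Sum>w\<in>B. (g w)^2) \<le> \<sigma>2 * real (card B)" and "0 < \<eta>" "\<eta> \<le> 1"
  shows "(\<Sum>w\<in>B. exp (\<eta> * g w)) \<le> real (card B) * exp (\<eta> * ((\<Sum>w\<in>B. g w) / real (card B)) + \<eta>^2 * \<sigma>2)"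
proof -
  let ?N = "real (card B)"
  have N: "?N > 0" using assms(1,2) by (simp add: card_gt_0_iff)
  have "(\<Sum>w\<in>B. exp (\<eta> * g w)) \<le> (\<Sum>w\<in>B. 1 + \<eta> * g w + \<eta>^2 * (g w)^2)"
  proof (rule sum_mono)
    fix w assume "w \<in> B"
    then have "\<bar>\<eta> * g w\<bar> \<le> 1" using assms(3,5,6) by (simp add: abs_mult mult_le_one)
    then have "exp (\<eta> * g w) \<le> 1 + \<eta> * g w + (\<eta> * g w)^2" by (rule exp_le_quadratic)
    then show "exp (\<eta> * g w) \<le> 1 + \<eta> * g w + \<eta>^2 * (g w)^2"
      by (simp add: power_mult_distrib)
  qed
  also have "\<dots> \<le> ?N * (1 + (\<eta> * ((\<Sum>w\<in>B. g w) / ?N) + \<eta>^2 * \<sigma>2))"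
    using mult_left_mono[OF assms(4), of "\<eta>^2"] N
    by (simp add: sum.distrib sum_distrib_left algebra_simps flip: sum_distrib_left)
  also have "\<dots> \<le> ?N * exp (\<eta> * ((\<Sum>w\<in>B. g w) / ?N) + \<eta>^2 * \<sigma>2)"
    using N by (intro mult_left_mono) auto
  finally show ?thesis .
qed

text \<open>The exponential moment method with \<open>\<eta> = t / (2\<sigma>\<^sup>2)\<close>. The variance proxy \<open>\<sigma>\<^sup>2\<close>, not the
  range of \<open>g\<close>, enters the exponent; with \<open>\<sigma>\<^sup>2 = k/d\<close> this is what yields the factor \<open>d\<close>
  (rather than \<open>d\<^sup>2\<close>) in the final failure probability.\<close>

lemma card_PiE_upper_tail:
  fixes g :: "'b \<Rightarrow> real"
  assumes fin: "finite I" "finite B" "B \<noteq> {}" and J: "J \<subseteq> I"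
    and g: "\<And>w. w \<in> B \<Longrightarrow> \<bar>g w\<bar> \<le> 1"
    and var: "\<sigma>2 > 0" "(\<Sum>w\<in>B. (g w)^2) \<le> \<sigma>2 * real (card B)"
    and t: "0 < t" "t \<le> 2 * \<sigma>2"
  shows "real (card {W \<in> PiE I (\<lambda>_. B).
            real (card J) * ((\<Sum>w\<in>B. g w) / real (card B) + t) \<le> (\<Sum>i\<in>J. g (W i))})
     \<le> exp (- real (card J) * t^2 / (4 * \<sigma>2)) * real (card (PiE I (\<lambda>_. B)))"
proof -
  let ?\<Omega> = "PiE I (\<lambda>_. B)" and ?N = "real (card B)" and ?q = "real (card J)"
  define m where "m = (\<Sum>w\<in>B. g w) / ?N"
  define \<eta> where "\<eta> = t / (2 * \<sigma>2)"
  define \<theta> where "\<theta> = ?q * (m + t)"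
  have \<eta>: "0 < \<eta>" "\<eta> \<le> 1" using t var by (auto simp: \<eta>_def field_simps)
  have card_\<Omega>: "?N ^ card J * ?N ^ (card I - card J) = real (card ?\<Omega>)"
    using fin J by (simp add: card_PiE card_mono flip: power_add)
  have "real (card {W \<in> ?\<Omega>. \<theta> \<le> (\<Sum>i\<in>J. g (W i))}) = (\<Sum>W\<in>{W \<in> ?\<Omega>. \<theta> \<le> (\<Sum>i\<in>J. g (W i))}. 1)"
    by simp
  also have "\<dots> \<le> (\<Sum>W\<in>{W \<in> ?\<Omega>. \<theta> \<le> (\<Sum>i\<in>J. g (W i))}. exp (\<eta> * ((\<Sum>i\<in>J. g (W i)) - \<theta>)))"
    using \<eta> by (intro sum_mono) simp
  also have "\<dots> \<le> (\<Sum>W\<in>?\<Omega>. exp (\<eta> * ((\<Sum>i\<in>J. g (W i)) - \<theta>)))"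
    using fin by (intro sum_mono2) (auto simp: finite_PiE)
  also have "\<dots> = exp (- \<eta> * \<theta>) * (\<Sum>W\<in>?\<Omega>. \<Prod>i\<in>J. exp (\<eta> * g (W i)))"
  proof -
    have "exp (\<eta> * ((\<Sum>i\<in>J. g (W i)) - \<theta>)) = exp (- \<eta> * \<theta>) * exp (\<Sum>i\<in>J. \<eta> * g (W i))" for W
      by (simp add: sum_distrib_left algebra_simps flip: exp_add)
    then show ?thesis
      using finite_subset[OF J fin(1)] by (simp add: exp_sum sum_distrib_left)
  qed
  also have "\<dots> = exp (- \<eta> * \<theta>) * ((\<Sum>w\<in>B. exp (\<eta> * g w)) ^ card J * ?N ^ (card I - card J))"
    by (simp only: sum_PiE_prod_subset[OF fin(1,2) J, of "\<lambda>w. exp (\<eta> * g w)"])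
  also have "\<dots> \<le> exp (- \<eta> * \<theta>) * ((?N * exp (\<eta> * m + \<eta>^2 * \<sigma>2)) ^ card J * ?N ^ (card I - card J))"
    using sum_exp_le_exp_mean_var[OF fin(2,3) g var(2) \<eta>]
    by (intro mult_left_mono mult_right_mono power_mono) (auto simp: m_def sum_nonneg)
  also have "\<dots> = exp (- \<eta> * \<theta> + ?q * (\<eta> * m + \<eta>^2 * \<sigma>2)) * real (card ?\<Omega>)"
  proof -
    have "(?N * exp (\<eta> * m + \<eta>^2 * \<sigma>2)) ^ card J = ?N ^ card J * exp (?q * (\<eta> * m + \<eta>^2 * \<sigma>2))"
      by (simp only: power_mult_distrib exp_of_nat_mult)
    then show ?thesis by (simp only: exp_add mult_ac flip: card_\<Omega>)
  qed
  also have "- \<eta> * \<theta> + ?q * (\<eta> * m + \<eta>^2 * \<sigma>2) = - ?q * t^2 / (4 * \<sigma>2)"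
    using var by (simp add: \<theta>_def \<eta>_def field_simps power2_eq_square)
  finally show ?thesis by (simp add: \<theta>_def m_def)
qed

lemma card_PiE_deviation:
  fixes g :: "'b \<Rightarrow> real"
  assumes fin: "finite I" "finite B" "B \<noteq> {}" and J: "J \<subseteq> I"
    and g: "\<And>w. w \<in> B \<Longrightarrow> \<bar>g w\<bar> \<le> 1"
    and var: "\<sigma>2 > 0" "(\<Sum>w\<in>B. (g w)^2) \<le> \<sigma>2 * real (card B)"
    and t: "0 < t" "t \<le> 2 * \<sigma>2"
  shows "real (card {W \<in> PiE I (\<lambda>_. B).
            real (card J) * t \<le> \<bar>(\<Sum>i\<in>J. g (W i)) - real (card J) * ((\<Sum>w\<in>B. g w) / real (card B))\<bar>})
     \<le> 2 * exp (- real (card J) * t^2 / (4 * \<sigma>2)) * real (card (PiE I (\<lambda>_. B)))"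
proof -
  let ?\<Omega> = "PiE I (\<lambda>_. B)" and ?q = "real (card J)"
  define U where "U h = {W \<in> ?\<Omega>. ?q * ((\<Sum>w\<in>B. h w) / real (card B) + t) \<le> (\<Sum>i\<in>J. h (W i))}"
    for h :: "'b \<Rightarrow> real"
  define m where "m = (\<Sum>w\<in>B. g w) / real (card B)"
  have "{W \<in> ?\<Omega>. ?q * t \<le> \<bar>(\<Sum>i\<in>J. g (W i)) - ?q * m\<bar>} \<subseteq> U g \<union> U (\<lambda>w. - g w)"
  proof
    fix W assume "W \<in> {W \<in> ?\<Omega>. ?q * t \<le> \<bar>(\<Sum>i\<in>J. g (W i)) - ?q * m\<bar>}"
    then have W: "W \<in> ?\<Omega>" and dev: "?q * t \<le> \<bar>(\<Sum>i\<in>J. g (W i)) - ?q * m\<bar>" by auto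
    have "?q * (m + t) \<le> (\<Sum>i\<in>J. g (W i)) \<or> ?q * (- m + t) \<le> - (\<Sum>i\<in>J. g (W i))"
      using dev by (auto simp: abs_if algebra_simps split: if_splits)
    then show "W \<in> U g \<union> U (\<lambda>w. - g w)"
      using W by (auto simp: U_def m_def sum_negf)
  qed
  then have "real (card {W \<in> ?\<Omega>. ?q * t \<le> \<bar>(\<Sum>i\<in>J. g (W i)) - ?q * m\<bar>})
      \<le> real (card (U g)) + real (card (U (\<lambda>w. - g w)))"
    using fin by (simp flip: of_nat_add) (intro order_trans[OF card_mono card_Un_le]; simp add: U_def finite_PiE)
  also have "\<dots> \<le> 2 * (exp (- ?q * t^2 / (4 * \<sigma>2)) * real (card ?\<Omega>))"
  proof -
    have tail: "real (card (U h)) \<le> exp (- ?q * t^2 / (4 * \<sigma>2)) * real (card ?\<Omega>)"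
      if "\<And>w. w \<in> B \<Longrightarrow> \<bar>h w\<bar> \<le> 1" "(\<Sum>w\<in>B. (h w)^2) \<le> \<sigma>2 * real (card B)" for h
      unfolding U_def by (rule card_PiE_upper_tail[OF fin J that(1) var(1) that(2) t])
    show ?thesis
      using tail[of g] tail[of "\<lambda>w. - g w"] g var(2) by simp
  qed
  finally show ?thesis by (simp add: m_def)
qed

subsection \<open>Polynomial threshold representations\<close>

lemma is_PTF_mono: "is_PTF X V h f K M B \<Longrightarrow> M \<le> M' \<Longrightarrow> is_PTF X V h f K M' B"
  unfolding is_PTF_def by force

lemma is_PTF_const:
  assumes "s \<in> {-1, 1}" "\<And>x. x \<in> X \<Longrightarrow> f x = s" "1 \<le> M" "1 \<le> B"
  shows "is_PTF X V h f K M B"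
  unfolding is_PTF_def
proof (intro exI[of _ "rpoly_const s"] conjI ballI)
  show "rpoly_vars (rpoly_const s) \<subseteq> V" "rpoly_deg_le (rpoly_const s) K" by simp_all
  show "coeff_norm (rpoly_const s) \<le> M"
    by (rule order_trans[OF coeff_norm_le_l1_norm]) (use assms(1,3) in auto)
  fix x assume "x \<in> X"
  then have "rpoly_eval (rpoly_const s) (h x) * f x = 1" using assms(1,2) by auto
  then show "1 \<le> rpoly_eval (rpoly_const s) (h x) * f x" "rpoly_eval (rpoly_const s) (h x) * f x \<le> B"
    using assms(4) by auto
qed

lemma is_PTF_var:
  assumes "m \<in> V" "\<And>x. x \<in> X \<Longrightarrow> f x \<in> {-1, 1} \<and> h x m = f x" "1 \<le> M" "1 \<le> B" "1 \<le> K"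
  shows "is_PTF X V h f K M B"
  unfolding is_PTF_def
proof (intro exI[of _ "rpoly_var m"] conjI ballI)
  show "rpoly_vars (rpoly_var m) \<subseteq> V" "rpoly_deg_le (rpoly_var m) K"
    using assms(1,5) by (simp_all add: rpoly_deg_le_var)
  show "coeff_norm (rpoly_var m) \<le> M"
    by (rule order_trans[OF coeff_norm_le_l1_norm]) (use assms(3) in simp)
  fix x assume "x \<in> X"
  then have "rpoly_eval (rpoly_var m) (h x) * f x = 1" using assms(2)[of x] by auto
  then show "1 \<le> rpoly_eval (rpoly_var m) (h x) * f x" "rpoly_eval (rpoly_var m) (h x) * f x \<le> B"
    using assms(4) by auto
qed

lemma Max_abs_diff_le:
  fixes y z :: "nat \<Rightarrow> real"
  assumes "1 \<le> d" "\<And>l. l < d \<Longrightarrow> \<bar>y l - z l\<bar> \<le> e"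
  shows "Max ((\<lambda>l. \<bar>y l - z l\<bar>) ` {..<d}) \<le> e"
proof -
  have "(\<lambda>l. \<bar>y l - z l\<bar>) ` {..<d} \<noteq> {}" using assms(1) by (auto simp: lessThan_empty_iff)
  then show ?thesis using assms(2) by simp
qed

lemma lipschitz_box_close:
  assumes lip: "lipschitz_box d L P" and ext: "is_multilinear_ext d g P"
    and d: "1 \<le> d" and L: "0 \<le> L" and z: "z \<in> cube d"
    and y: "\<And>v. v < d \<Longrightarrow> \<bar>y v\<bar> \<le> 1 \<and> \<bar>y v - z v\<bar> \<le> e"
  shows "\<bar>rpoly_eval P y - g z\<bar> \<le> L * e"
proof -
  have "\<bar>z v\<bar> \<le> 1" if "v < d" for v
    using cube_coord[OF z that] by auto
  then have "\<bar>rpoly_eval P y - rpoly_eval P z\<bar> \<le> L * Max ((\<lambda>v. \<bar>y v - z v\<bar>) ` {..<d})"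
    using lip y unfolding lipschitz_box_def by blast
  also have "\<dots> \<le> L * e"
    using L y by (intro mult_left_mono Max_abs_diff_le[OF d]) auto
  finally show ?thesis using ext z by (simp add: is_multilinear_ext_def)
qed

lemma lipschitz_box_lt_1_sign_const:
  assumes lip: "lipschitz_box d L P" and ext: "is_multilinear_ext d g P" and L: "0 \<le> L" "L < 1"
    and sign: "\<And>x. x \<in> cube d \<Longrightarrow> g x \<in> {-1, 1}" and d: "1 \<le> d"
    and x: "x \<in> cube d" and y: "y \<in> cube d"
  shows "g x = g y"
proof -
  have "\<bar>y v\<bar> \<le> 1 \<and> \<bar>y v - x v\<bar> \<le> 2" if "v < d" for v
    using cube_coord[OF x that] cube_coord[OF y that] by auto
  then have "\<bar>rpoly_eval P y - g x\<bar> \<le> L * 2"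
    by (rule lipschitz_box_close[OF lip ext d L(1) x])
  moreover have "rpoly_eval P y = g y" using ext y by (simp add: is_multilinear_ext_def)
  ultimately have "\<bar>g y - g x\<bar> < 2" using L by simp
  then show ?thesis using sign[OF x] sign[OF y] by auto
qed

lemma sign_margin_of_close:
  fixes E S k :: real
  assumes "\<bar>E - 2 * S\<bar> \<le> 1" "1 \<le> \<bar>S\<bar>" "\<bar>S\<bar> \<le> k"
  shows "1 \<le> E * sgn S" "E * sgn S \<le> 2 * k + 1"
proof -
  consider "S > 0" | "S < 0" using assms(2) by linarith
  then have "1 \<le> E * sgn S \<and> E * sgn S \<le> 2 * k + 1"
    by cases (use assms in \<open>auto simp: abs_le_iff\<close>)
  then show "1 \<le> E * sgn S" "E * sgn S \<le> 2 * k + 1" by auto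
qed

lemma coeff_l1_norm_subst_multilinear_ext_sign:
  assumes ext: "is_multilinear_ext d g P" and sign: "\<And>x. x \<in> cube d \<Longrightarrow> g x \<in> {-1, 1}"
    and deg: "rpoly_deg_le P K" and d: "1 \<le> d"
    and zz: "\<And>v. v < d \<Longrightarrow> coeff_l1_norm (zz v) \<le> B0" and B0: "1 \<le> B0"
  shows "coeff_l1_norm (rpoly_subst P zz) \<le> sqrt (real ((K + 1) * d ^ K)) * B0 ^ K"
proof -
  have "rpoly_vars P \<subseteq> {..<d}" using ext by (simp add: is_multilinear_ext_def)
  then have "coeff_l1_norm (rpoly_subst P zz) \<le> coeff_l1_norm P * B0 ^ K"
    using zz by (intro coeff_l1_norm_subst[OF _ B0 deg]) auto
  also have "\<dots> \<le> sqrt (real ((K + 1) * d ^ K)) * B0 ^ K"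
    using sign B0 by (intro mult_right_mono coeff_l1_norm_multilinear_ext_sign[OF ext _ deg d]) auto
  finally show ?thesis .
qed

text \<open>Doubling the weights leaves room for the Lipschitz error: at the estimated inputs the
  polynomial is within \<open>2 k L e \<le> 1\<close> of \<open>2 \<Sum>\<^sub>l w\<^sub>l p\<^sub>l(z)\<close>, whose absolute value is at least 2.\<close>

lemma is_PTF_threshold_of_approx_inputs:
  fixes P :: "nat \<Rightarrow> nat rpoly" and zz :: "nat \<Rightarrow> 'v rpoly" and h :: "'x \<Rightarrow> 'v \<Rightarrow> real"
  assumes k: "odd k" and w: "w \<in> Wdk d k" and d: "1 \<le> d" and L: "0 \<le> L"
    and P: "\<And>l. l < d \<Longrightarrow> is_multilinear_ext d (p l) (P l) \<and> rpoly_deg_le (P l) K \<and> lipschitz_box d L (P l)"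
    and sign: "\<And>l x. l < d \<Longrightarrow> x \<in> cube d \<Longrightarrow> p l x \<in> {-1, 1}"
    and zz: "\<And>v. v < d \<Longrightarrow> rpoly_vars (zz v) \<subseteq> V \<and> rpoly_deg_le (zz v) 1 \<and> coeff_l1_norm (zz v) \<le> B0"
    and B0: "1 \<le> B0"
    and z: "\<And>x. x \<in> X \<Longrightarrow> z x \<in> cube d"
    and approx: "\<And>x v. x \<in> X \<Longrightarrow> v < d \<Longrightarrow>
       \<bar>rpoly_eval (zz v) (h x)\<bar> \<le> 1 \<and> \<bar>rpoly_eval (zz v) (h x) - z x v\<bar> \<le> e"
    and err: "2 * real k * L * e \<le> 1"
    and f: "\<And>x. x \<in> X \<Longrightarrow> f x = sgn (\<Sum>l<d. w l * p l (z x))"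
  shows "is_PTF X V h f K (2 * real k * sqrt (real ((K + 1) * d ^ K)) * B0 ^ K) (2 * real k + 1)"
proof -
  define Q where "Q = (\<Sum>l<d. rpoly_const (2 * w l) * rpoly_subst (P l) zz)"
  have vars_P: "rpoly_vars (P l) \<subseteq> {..<d}" if "l < d" for l
    using P[OF that] by (simp add: is_multilinear_ext_def)
  have "rpoly_vars Q \<subseteq> V"
    unfolding Q_def using zz vars_P
    by (intro rpoly_vars_sum order_trans[OF rpoly_vars_const_mult] rpoly_vars_subst) blast
  moreover have "rpoly_deg_le Q K"
    unfolding Q_def using zz vars_P P
    by (intro rpoly_deg_le_sum rpoly_deg_le_const_mult rpoly_deg_le_subst) blast+
  moreover have "coeff_norm Q \<le> 2 * real k * sqrt (real ((K + 1) * d ^ K)) * B0 ^ K"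
  proof -
    have "coeff_l1_norm (rpoly_subst (P l) zz) \<le> sqrt (real ((K + 1) * d ^ K)) * B0 ^ K" if "l < d" for l
      using P[OF that] sign[OF that] zz B0 by (intro coeff_l1_norm_subst_multilinear_ext_sign[OF _ _ _ d]) auto
    then have "coeff_l1_norm Q \<le> (\<Sum>l<d. 2 * \<bar>w l\<bar> * (sqrt (real ((K + 1) * d ^ K)) * B0 ^ K))"
      unfolding Q_def
      by (intro order_trans[OF coeff_l1_norm_sum] sum_mono order_trans[OF coeff_l1_norm_const_mult])
        (auto simp: abs_mult intro: mult_left_mono)
    also have "\<dots> = 2 * real k * sqrt (real ((K + 1) * d ^ K)) * B0 ^ K"
      using Wdk_sum_abs[OF w] by (simp add: sum_distrib_right[symmetric] flip: sum_distrib_left mult.assoc)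
    finally show ?thesis using coeff_norm_le_l1_norm[of Q] by linarith
  qed
  moreover have "1 \<le> rpoly_eval Q (h x) * f x \<and> rpoly_eval Q (h x) * f x \<le> 2 * real k + 1" if x: "x \<in> X" for x
  proof -
    let ?y = "\<lambda>v. rpoly_eval (zz v) (h x)" and ?S = "\<Sum>l<d. w l * p l (z x)"
    have close: "\<bar>rpoly_eval (P l) ?y - p l (z x)\<bar> \<le> L * e" if "l < d" for l
      using P[OF that] approx[OF x] by (intro lipschitz_box_close[OF _ _ d L z[OF x]]) auto
    have "\<bar>rpoly_eval Q (h x) - 2 * ?S\<bar> = \<bar>\<Sum>l<d. 2 * w l * (rpoly_eval (P l) ?y - p l (z x))\<bar>"
      by (simp add: Q_def rpoly_eval_sum rpoly_eval_mult rpoly_eval_subst sum_distrib_left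
          algebra_simps flip: sum_subtractf)
    also have "\<dots> \<le> (\<Sum>l<d. 2 * \<bar>w l\<bar> * (L * e))"
      using close by (intro order_trans[OF sum_abs] sum_mono) (auto simp: abs_mult intro: mult_left_mono)
    also have "\<dots> = 2 * real k * L * e"
      using Wdk_sum_abs[OF w] by (simp add: sum_distrib_right[symmetric] flip: sum_distrib_left mult.assoc)
    finally have "\<bar>rpoly_eval Q (h x) - 2 * ?S\<bar> \<le> 1" using err by linarith
    moreover have "1 \<le> \<bar>?S\<bar>" "\<bar>?S\<bar> \<le> real k"
      using Wdk_inner_odd_bounds[OF w _ k, where z = "\<lambda>l. p l (z x)"] sign z[OF x] by auto
    ultimately show ?thesis using sign_margin_of_close f[OF x] by simp
  qed
  ultimately show ?thesis unfolding is_PTF_def by blast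
qed

subsection \<open>Random layered hierarchies\<close>

lemma has_hierarchy_levelsI:
  fixes f :: "nat \<times> nat \<Rightarrow> (nat \<Rightarrow> real) \<Rightarrow> real"
  assumes K: "1 \<le> K" and M: "1 \<le> M" and B: "1 \<le> B"
    and sign: "\<And>i j x. i \<in> {1..r} \<Longrightarrow> j \<in> {1..q} \<Longrightarrow> x \<in> X \<Longrightarrow> f (i, j) x \<in> {-1, 1}"
    and level1: "\<And>j. j \<in> {1..q} \<Longrightarrow> is_PTF X {..<d} (\<lambda>x. x) (f (1, j)) K M B"
    and level_succ: "\<And>i j. i \<in> {2..r} \<Longrightarrow> j \<in> {1..q} \<Longrightarrow>
       is_PTF X (levels q (i - 1)) (\<lambda>x m. f m x) (f (i, j)) K M B"
  shows "has_hierarchy X d r (levels q) f K M B"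
  unfolding has_hierarchy_def
proof (intro conjI ballI)
  fix m assume "m \<in> levels q 1"
  then obtain j where "m = (1, j)" "j \<in> {1..q}" by (auto simp: levels_def)
  then show "is_PTF X {..<d} (\<lambda>x. x) (f m) K M B" using level1 by simp
next
  fix i m assume i: "i \<in> {2..r}" and m: "m \<in> levels q i"
  then obtain i' j where m': "m = (i', j)" "i' \<in> {1..i}" "j \<in> {1..q}" by (auto simp: levels_def)
  show "is_PTF X (levels q (i - 1)) (\<lambda>x m'. f m' x) (f m) K M B"
  proof (cases "i' = i")
    case True
    then show ?thesis using level_succ[OF i m'(3)] m'(1) by simp
  next
    case False
    then have mi: "m \<in> levels q (i - 1)" using m' i by (auto simp: levels_def)
    have "f m x \<in> {-1, 1}" if "x \<in> X" for x
      using sign[of i' j x] m' i that by auto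
    then show ?thesis by (intro is_PTF_var[OF mi _ M B K]) simp
  qed
qed (auto simp: levels_def)

lemma prob_pmf_of_set_ge:
  assumes fin: "finite \<Omega>" "\<Omega> \<noteq> {}" and bad: "Bad \<subseteq> \<Omega>" "\<Omega> - Bad \<subseteq> H"
    and card: "real (card Bad) \<le> \<delta> * real (card \<Omega>)"
  shows "1 - \<delta> \<le> measure_pmf.prob (pmf_of_set \<Omega>) H"
proof -
  have N: "real (card \<Omega>) > 0" using fin by (simp add: card_gt_0_iff)
  have "card \<Omega> \<le> card ((\<Omega> \<inter> H) \<union> Bad)"
    using fin bad by (intro card_mono) (auto intro: finite_subset)
  also have "\<dots> \<le> card (\<Omega> \<inter> H) + card Bad" by (rule card_Un_le)
  finally have "real (card \<Omega>) \<le> real (card (\<Omega> \<inter> H)) + real (card Bad)" by linarith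
  then have "real (card \<Omega>) * (1 - \<delta>) \<le> real (card (\<Omega> \<inter> H))" using card by (simp add: algebra_simps)
  then have "1 - \<delta> \<le> real (card (\<Omega> \<inter> H)) / real (card \<Omega>)"
    using N by (simp add: pos_le_divide_eq mult.commute)
  also have "\<dots> = measure_pmf.prob (pmf_of_set \<Omega>) H" using fin by (simp add: measure_pmf_of_set)
  finally show ?thesis .
qed

lemma rescaled_estimate_close:
  fixes D e z T :: real
  assumes D: "0 < D" and e: "0 < e" and z: "\<bar>z\<bar> = 1" and T: "\<bar>T - D * z\<bar> \<le> D * e"
  shows "\<bar>T / ((1 + e) * D)\<bar> \<le> 1" "\<bar>T / ((1 + e) * D) - z\<bar> \<le> 2 * e"
proof -
  define s where "s = (1 + e) * D"
  have s: "s > 0" using D e by (simp add: s_def)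
  have Dz: "\<bar>D * z\<bar> = D" using D z by (simp add: abs_mult)
  have "\<bar>T\<bar> \<le> \<bar>T - D * z\<bar> + \<bar>D * z\<bar>" using abs_triangle_ineq[of "T - D * z" "D * z"] by simp
  then have "\<bar>T\<bar> \<le> s" using T Dz by (simp add: s_def algebra_simps)
  then show "\<bar>T / ((1 + e) * D)\<bar> \<le> 1" using s by (simp add: abs_divide s_def[symmetric])
  have "\<bar>T - s * z\<bar> \<le> \<bar>T - D * z\<bar> + \<bar>e * (D * z)\<bar>"
    using abs_triangle_ineq4[of "T - D * z" "e * (D * z)"] by (simp add: s_def algebra_simps)
  also have "\<dots> \<le> 2 * e * D"
    using T Dz e by (simp add: abs_mult)
  also have "\<dots> \<le> 2 * e * s"
    using e D by (simp add: s_def algebra_simps)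
  finally have "\<bar>T - s * z\<bar> / s \<le> 2 * e" using s by (simp add: divide_le_eq mult.commute)
  moreover have "T / s - z = (T - s * z) / s" using s by (simp add: diff_divide_distrib)
  ultimately show "\<bar>T / ((1 + e) * D) - z\<bar> \<le> 2 * e" using s by (simp add: abs_divide s_def[symmetric])
qed

locale layered_model =
  fixes K d r q k :: nat and X :: "(nat \<Rightarrow> real) set" and L :: real
    and G :: "nat \<Rightarrow> (nat \<Rightarrow> real) \<Rightarrow> nat \<Rightarrow> real"
    and p :: "nat \<Rightarrow> nat \<Rightarrow> (nat \<Rightarrow> real) \<Rightarrow> real" and P :: "nat \<Rightarrow> nat \<Rightarrow> nat rpoly"
  assumes K: "1 \<le> K" and X: "X \<subseteq> cube d" and r: "1 \<le> r" and q: "1 \<le> q" and L: "0 < L"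
    and k: "odd k" "1 \<le> k" "k \<le> d"
    and G_cube: "\<And>i x. i \<le> r \<Longrightarrow> x \<in> cube d \<Longrightarrow> G i x \<in> cube d"
    and G_0: "\<And>x. x \<in> cube d \<Longrightarrow> G 0 x = x"
    and p_sign: "\<And>i j x. i \<in> {1..r} \<Longrightarrow> j < d \<Longrightarrow> x \<in> cube d \<Longrightarrow> p i j x \<in> {-1, 1}"
    and P: "\<And>i j. i \<in> {1..r} \<Longrightarrow> j < d \<Longrightarrow>
       is_multilinear_ext d (p i j) (P i j) \<and> rpoly_deg_le (P i j) K \<and> lipschitz_box d L (P i j)"
    and G_step: "\<And>i j x. i \<in> {1..r} \<Longrightarrow> j < d \<Longrightarrow> x \<in> X \<Longrightarrow> G i x j = p i j (G (i - 1) x)"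
begin

abbreviation \<Omega> :: "(nat \<times> nat \<Rightarrow> nat \<Rightarrow> real) set" where
  "\<Omega> \<equiv> PiE ({1..r} \<times> {1..q}) (\<lambda>_. Wdk d k)"

definition coeff_bound :: real where
  "coeff_bound = 2 * (real K + 1) * 10 ^ K * real k * real d ^ K"

definition tail_bound :: real where
  "tail_bound = exp (- (1 / 1600) * real q / (L^2 * real k^2 * real d))"

lemma one_le_d: "1 \<le> d"
  using k by simp

lemma G_cube_X: "i \<le> r \<Longrightarrow> x \<in> X \<Longrightarrow> G i x \<in> cube d"
  using G_cube X by blast

lemma finite_X: "finite X"
  using X by (rule finite_subset) simp

lemma \<Omega>_row: "W \<in> \<Omega> \<Longrightarrow> i \<in> {1..r} \<Longrightarrow> j \<in> {1..q} \<Longrightarrow> W (i, j) \<in> Wdk d k"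
  by auto

lemma fstar_sign:
  assumes "W \<in> \<Omega>" "i \<in> {1..r}" "j \<in> {1..q}" "x \<in> X"
  shows "fstar d G W (i, j) x \<in> {-1, 1}"
proof -
  have "G i x l \<in> {-1, 1}" if "l < d" for l
    using G_cube_X[of i x] assms(2,4) that by (simp add: cube_def)
  then show ?thesis
    unfolding fstar_def fst_conv by (rule sgn_Wdk_inner_odd[OF \<Omega>_row[OF assms(1-3)] _ k(1)])
qed

lemma one_le_coeff_bound: "1 \<le> coeff_bound"
proof -
  have "1 * 1 \<le> 2 * (real K + 1) * 10 ^ K"
    by (intro mult_mono) (simp_all add: one_le_power)
  moreover have "1 \<le> real k" "1 \<le> real d ^ K" using k one_le_d by (simp_all add: one_le_power)
  ultimately have "1 * 1 * 1 \<le> 2 * (real K + 1) * 10 ^ K * real k * real d ^ K"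
    by (intro mult_mono) simp_all
  then show ?thesis by (simp add: coeff_bound_def)
qed

lemma coeff_bound_ge:
  assumes "1 \<le> B0" "B0 \<le> 10 * sqrt (real k)"
  shows "2 * real k * sqrt (real ((K + 1) * d ^ K)) * B0 ^ K \<le> coeff_bound"
proof -
  define s where "s = sqrt (real d) ^ K"
  have s: "s * s = real d ^ K" "0 \<le> s"
    unfolding s_def by (simp_all flip: power_mult_distrib)
  have "real ((K + 1) * d ^ K) = (real K + 1) * real d ^ K" by (simp add: algebra_simps)
  then have "sqrt (real ((K + 1) * d ^ K)) = sqrt (real K + 1) * s"
    unfolding s_def by (simp only: real_sqrt_mult real_sqrt_power)
  also have "\<dots> \<le> (real K + 1) * s"
  proof (rule mult_right_mono)
    have "sqrt (real K + 1) \<le> sqrt ((real K + 1)^2)" by (intro real_sqrt_le_mono) (simp add: power2_eq_square)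
    then show "sqrt (real K + 1) \<le> real K + 1" by simp
  qed (rule s(2))
  finally have A: "sqrt (real ((K + 1) * d ^ K)) \<le> (real K + 1) * s" .
  have "B0 ^ K \<le> (10 * sqrt (real k)) ^ K" using assms by (intro power_mono) auto
  also have "\<dots> = 10 ^ K * sqrt (real k) ^ K" by (rule power_mult_distrib)
  also have "\<dots> \<le> 10 ^ K * s"
    unfolding s_def using k by (intro mult_left_mono power_mono) auto
  finally have B: "B0 ^ K \<le> 10 ^ K * s" .
  have "2 * real k * sqrt (real ((K + 1) * d ^ K)) \<le> 2 * real k * ((real K + 1) * s)"
    by (rule mult_left_mono[OF A]) simp
  then have "2 * real k * sqrt (real ((K + 1) * d ^ K)) * B0 ^ K \<le> 2 * real k * ((real K + 1) * s) * (10 ^ K * s)"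
    by (rule mult_mono[OF _ B]) (use s(2) assms(1) in simp_all)
  also have "\<dots> = coeff_bound"
    unfolding coeff_bound_def s(1)[symmetric] by (simp only: mult_ac)
  finally show ?thesis .
qed

lemma level1_PTF:
  assumes W: "W \<in> \<Omega>" and j: "j \<in> {1..q}"
  shows "is_PTF X {..<d} (\<lambda>x. x) (fstar d G W (1, j)) K coeff_bound (2 * real k + 1)"
proof -
  have r1: "1 \<in> {1..r}" using r by simp
  have "is_PTF X {..<d} (\<lambda>x. x) (fstar d G W (1, j)) K (2 * real k * sqrt (real ((K + 1) * d ^ K)) * 1 ^ K)
      (2 * real k + 1)"
  proof (rule is_PTF_threshold_of_approx_inputs[OF k(1) \<Omega>_row[OF W r1 j] one_le_d less_imp_le[OF L],
        where p = "p 1" and P = "P 1" and zz = rpoly_var and z = "\<lambda>x. x" and e = 0])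
    show "fstar d G W (1, j) x = sgn (\<Sum>l<d. W (1, j) l * p 1 l x)" if "x \<in> X" for x
      using that G_step[OF r1] G_0 X by (auto simp: fstar_def intro!: arg_cong[where f = sgn] sum.cong)
    show "\<bar>rpoly_eval (rpoly_var v) x\<bar> \<le> 1 \<and> \<bar>rpoly_eval (rpoly_var v) x - x v\<bar> \<le> 0"
      if "x \<in> X" "v < d" for x v
    proof -
      have "x \<in> cube d" using that X by blast
      then show ?thesis using cube_coord[OF _ that(2)] by fastforce
    qed
  qed (use P[OF r1] p_sign[OF r1] X in \<open>auto simp: rpoly_deg_le_var\<close>)
  moreover have "1 \<le> sqrt (real k)" using k by simp
  then have "1 \<le> 10 * sqrt (real k)" by linarith
  ultimately show ?thesis
    using coeff_bound_ge[of 1] by (auto elim!: is_PTF_mono)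
qed

lemma G_eq_if_lipschitz_lt_1:
  assumes L1: "L < 1" and i: "i \<in> {1..r}" and x: "x \<in> X" and y: "y \<in> X"
  shows "G i x = G i y"
proof
  fix l
  show "G i x l = G i y l"
  proof (cases "l < d")
    case True
    have i1: "i - 1 \<le> r" using i by auto
    have "p i l (G (i - 1) x) = p i l (G (i - 1) y)"
      using P[OF i True] by (intro lipschitz_box_lt_1_sign_const[OF _ _ less_imp_le[OF L] L1
          p_sign[OF i True] one_le_d G_cube_X[OF i1 x] G_cube_X[OF i1 y]]) auto
    then show ?thesis using G_step[OF i True x] G_step[OF i True y] by simp
  next
    case False
    then show ?thesis using G_cube_X i x y by (simp add: cube_def)
  qed
qed

lemma hierarchy_if_lipschitz_lt_1:
  assumes L1: "L < 1" and W: "W \<in> \<Omega>"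
  shows "has_hierarchy X d r (levels q) (fstar d G W) K coeff_bound (2 * real k + 1)"
proof -
  have PTF: "is_PTF X V h (fstar d G W (i, j)) K coeff_bound (2 * real k + 1)"
    if "i \<in> {1..r}" "j \<in> {1..q}" for i j and V :: "'v set" and h :: "_ \<Rightarrow> 'v \<Rightarrow> real"
  proof (cases "X = {}")
    case True
    then show ?thesis using one_le_coeff_bound by (intro is_PTF_const[of 1]) auto
  next
    case False
    then obtain x0 where x0: "x0 \<in> X" by auto
    have "fstar d G W (i, j) x = fstar d G W (i, j) x0" if "x \<in> X" for x
      using G_eq_if_lipschitz_lt_1[OF L1 \<open>i \<in> {1..r}\<close> that x0] by (simp add: fstar_def)
    then show ?thesis
      using fstar_sign[OF W that x0] one_le_coeff_bound by (intro is_PTF_const) auto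
  qed
  show ?thesis
  proof (rule has_hierarchy_levelsI[where f = "fstar d G W", OF K one_le_coeff_bound _ fstar_sign[OF W]])
    show "is_PTF X {..<d} (\<lambda>x. x) (fstar d G W (1, j)) K coeff_bound (2 * real k + 1)"
      if "j \<in> {1..q}" for j
      using r that by (intro PTF) auto
    show "is_PTF X (levels q (i - 1)) (\<lambda>x m. fstar d G W m x) (fstar d G W (i, j)) K coeff_bound
        (2 * real k + 1)" if "i \<in> {2..r}" "j \<in> {1..q}" for i j
      using that by (intro PTF) auto
  qed simp
qed

abbreviation \<nu> :: real where "\<nu> \<equiv> vote_correlation d k"

abbreviation \<epsilon> :: real where "\<epsilon> \<equiv> 1 / (4 * real k * L)"

lemma \<nu>_ge: "sqrt (real k) / 5 \<le> real d * \<nu>"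
  using vote_correlation_ge k by simp

lemma \<nu>_pos: "0 < \<nu>"
proof -
  have "0 < sqrt (real k) / 5" using k by simp
  then have "0 < real d * \<nu>" using \<nu>_ge by linarith
  then show ?thesis using one_le_d by (simp add: zero_less_mult_iff)
qed

lemma \<nu>_le: "\<nu> \<le> real k / real d"
  using vote_correlation_le one_le_d by simp

definition vote_deviation :: "(nat \<times> nat \<Rightarrow> nat \<Rightarrow> real) \<Rightarrow> nat \<Rightarrow> (nat \<Rightarrow> real) \<Rightarrow> nat \<Rightarrow> real" where
  "vote_deviation W a x v =
     \<bar>(\<Sum>j\<in>{1..q}. W (a, j) v * fstar d G W (a, j) x) - real q * \<nu> * G a x v\<bar>"

definition load_deviation :: "(nat \<times> nat \<Rightarrow> nat \<Rightarrow> real) \<Rightarrow> nat \<Rightarrow> nat \<Rightarrow> real" where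
  "load_deviation W a v = \<bar>(\<Sum>j\<in>{1..q}. \<bar>W (a, j) v\<bar>) - real q * (real k / real d)\<bar>"

definition bad_event :: "nat \<Rightarrow> (nat \<Rightarrow> real) \<Rightarrow> nat \<Rightarrow> (nat \<times> nat \<Rightarrow> nat \<Rightarrow> real) set" where
  "bad_event a x v = {W \<in> \<Omega>. real q * (\<nu> * \<epsilon>) \<le> vote_deviation W a x v} \<union>
     {W \<in> \<Omega>. real q * (real k / real d) \<le> load_deviation W a v}"

lemma card_row_deviation:
  assumes a: "a \<in> {1..r}" and g: "\<And>w. w \<in> Wdk d k \<Longrightarrow> \<bar>g w\<bar> \<le> 1"
    and var: "(\<Sum>w\<in>Wdk d k. (g w)^2) \<le> real k / real d * real (card (Wdk d k))"
    and t: "0 < t" "t \<le> 2 * (real k / real d)"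
  shows "real (card {W \<in> \<Omega>. real q * t \<le>
            \<bar>(\<Sum>j\<in>{1..q}. g (W (a, j))) - real q * ((\<Sum>w\<in>Wdk d k. g w) / real (card (Wdk d k)))\<bar>})
     \<le> 2 * exp (- real q * t^2 / (4 * (real k / real d))) * real (card \<Omega>)"
proof -
  let ?J = "(\<lambda>j. (a, j)) ` {1..q}"
  have inj: "inj_on (\<lambda>j. (a, j)) {1..q}" by (auto simp: inj_on_def)
  have card_J: "card ?J = q" using card_image[OF inj] by simp
  have sum_J: "(\<Sum>i\<in>?J. g (W i)) = (\<Sum>j\<in>{1..q}. g (W (a, j)))" for W
    using sum.reindex[OF inj, of "\<lambda>i. g (W i)"] by simp
  have J: "?J \<subseteq> {1..r} \<times> {1..q}" using a by auto
  have "real (card {W \<in> \<Omega>. real (card ?J) * t \<le>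
            \<bar>(\<Sum>i\<in>?J. g (W i)) - real (card ?J) * ((\<Sum>w\<in>Wdk d k. g w) / real (card (Wdk d k)))\<bar>})
     \<le> 2 * exp (- real (card ?J) * t^2 / (4 * (real k / real d))) * real (card \<Omega>)"
    by (rule card_PiE_deviation[OF _ _ Wdk_nonempty[OF k(3)] J g _ var t]) (use k one_le_d in auto)
  then show ?thesis unfolding card_J sum_J .
qed

lemma exp_vote_tail_le:
  assumes L1: "1 \<le> L"
  shows "exp (- real q * (\<nu> * \<epsilon>)^2 / (4 * (real k / real d))) \<le> tail_bound"
proof -
  have k0: "real k > 0" and d0: "real d > 0" using k one_le_d by auto
  have "real k / 25 \<le> (real d * \<nu>)^2"
    using power_mono[OF \<nu>_ge, of 2] by (simp add: power_divide)
  then have "(real k / 25) / (64 * real k^3 * L^2 * real d) \<le> (real d * \<nu>)^2 / (64 * real k^3 * L^2 * real d)"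
    using k0 d0 L1 by (intro divide_right_mono) auto
  moreover have "(1 / 1600) / (L^2 * real k^2 * real d) = (real k / 25) / (64 * real k^3 * L^2 * real d)"
    using k0 d0 L1 by (simp add: field_simps power2_eq_square power3_eq_cube)
  moreover have "(\<nu> * \<epsilon>)^2 / (4 * (real k / real d)) = (real d * \<nu>)^2 / (64 * real k^3 * L^2 * real d)"
    using k0 d0 L1 by (simp add: field_simps power2_eq_square power3_eq_cube)
  ultimately have "real q * ((1 / 1600) / (L^2 * real k^2 * real d))
      \<le> real q * ((\<nu> * \<epsilon>)^2 / (4 * (real k / real d)))"
    by (intro mult_left_mono) simp_all
  moreover have "- real q * (\<nu> * \<epsilon>)^2 / (4 * (real k / real d))
      = - (real q * ((\<nu> * \<epsilon>)^2 / (4 * (real k / real d))))" by simp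
  moreover have "- (1 / 1600) * real q / (L^2 * real k^2 * real d)
      = - (real q * ((1 / 1600) / (L^2 * real k^2 * real d)))" by simp
  ultimately show ?thesis unfolding tail_bound_def by simp
qed

lemma exp_load_tail_le:
  assumes L1: "1 \<le> L"
  shows "exp (- real q * (real k / real d)^2 / (4 * (real k / real d))) \<le> tail_bound"
proof -
  have k0: "real k > 0" and d0: "real d > 0" using k one_le_d by auto
  have "1 \<le> L^2 * real k^2" using L1 k by (simp add: one_le_power mult_ge1_I)
  then have "4 * real d \<le> 1600 * (L^2 * real k^2 * real d)" using d0 by (simp add: mult_ge1_I)
  then have "(1 / 1600) / (L^2 * real k^2 * real d) \<le> 1 / (4 * real d)"
    using d0 by (simp add: divide_simps)
  also have "\<dots> \<le> real k / (4 * real d)" using k d0 by (intro divide_right_mono) auto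
  also have "\<dots> = (real k / real d)^2 / (4 * (real k / real d))"
    using k0 d0 by (simp add: field_simps power2_eq_square)
  finally have "real q * ((1 / 1600) / (L^2 * real k^2 * real d))
      \<le> real q * ((real k / real d)^2 / (4 * (real k / real d)))"
    by (rule mult_left_mono) simp
  moreover have "- real q * (real k / real d)^2 / (4 * (real k / real d))
      = - (real q * ((real k / real d)^2 / (4 * (real k / real d))))" by simp
  moreover have "- (1 / 1600) * real q / (L^2 * real k^2 * real d)
      = - (real q * ((1 / 1600) / (L^2 * real k^2 * real d)))" by simp
  ultimately show ?thesis unfolding tail_bound_def by simp
qed

lemma \<epsilon>_pos: "0 < \<epsilon>"
  using k L by simp

lemma \<epsilon>_le_1: "1 \<le> L \<Longrightarrow> \<epsilon> \<le> 1"
  using k mult_ge1_I[of "4 * real k" L] by (simp add: divide_le_eq)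

lemma card_vote_deviation:
  assumes L1: "1 \<le> L" and a: "a \<in> {1..r}" and x: "x \<in> X" and v: "v < d"
  shows "real (card {W \<in> \<Omega>. real q * (\<nu> * \<epsilon>) \<le> vote_deviation W a x v}) \<le> 2 * tail_bound * real (card \<Omega>)"
proof -
  let ?W = "Wdk d k" and ?N = "real (card (Wdk d k))"
  define g where "g w = w v * sgn (\<Sum>l<d. w l * G a x l)" for w :: "nat \<Rightarrow> real"
  have g_le: "\<bar>g w\<bar> \<le> \<bar>w v\<bar>" for w
    by (simp add: g_def abs_mult sgn_real_def)
  have "(\<Sum>w\<in>?W. g w) = G a x v * (\<Sum>w\<in>?W. w 0 * sgn (\<Sum>m<d. w m))"
    unfolding g_def by (rule sum_Wdk_coord_vote[OF G_cube_X[OF _ x] v]) (use a in auto)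
  then have mean: "(\<Sum>w\<in>?W. g w) / ?N = \<nu> * G a x v"
    by (simp add: vote_correlation_def)
  have "(\<Sum>w\<in>?W. (g w)^2) \<le> (\<Sum>w\<in>?W. \<bar>w v\<bar>)"
    using g_le by (intro sum_mono) (metis Wdk_coord_sq abs_ge_zero power2_abs power_mono)
  then have var: "(\<Sum>w\<in>?W. (g w)^2) \<le> real k / real d * ?N"
    using sum_Wdk_abs_coord[OF v] by simp
  have "\<nu> * \<epsilon> \<le> real k / real d * 1"
    by (rule mult_mono[OF \<nu>_le \<epsilon>_le_1[OF L1]]) (use \<epsilon>_pos in auto)
  moreover have "0 < real k / real d" using k one_le_d by simp
  ultimately have t: "0 < \<nu> * \<epsilon>" "\<nu> * \<epsilon> \<le> 2 * (real k / real d)"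
    using \<nu>_pos \<epsilon>_pos by auto
  have dev: "vote_deviation W a x v = \<bar>(\<Sum>j\<in>{1..q}. g (W (a, j))) - real q * ((\<Sum>w\<in>?W. g w) / ?N)\<bar>" for W
    unfolding mean by (simp add: vote_deviation_def fstar_def g_def mult.assoc)
  have "real (card {W \<in> \<Omega>. real q * (\<nu> * \<epsilon>) \<le> vote_deviation W a x v})
      \<le> 2 * exp (- real q * (\<nu> * \<epsilon>)^2 / (4 * (real k / real d))) * real (card \<Omega>)"
    unfolding dev using g_le Wdk_abs_coord_le_1
    by (intro card_row_deviation[OF a _ var t]) (blast intro: order_trans)
  also have "\<dots> \<le> 2 * tail_bound * real (card \<Omega>)"
    using exp_vote_tail_le[OF L1] by (intro mult_right_mono) simp_all
  finally show ?thesis .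
qed

lemma card_load_deviation:
  assumes L1: "1 \<le> L" and a: "a \<in> {1..r}" and v: "v < d"
  shows "real (card {W \<in> \<Omega>. real q * (real k / real d) \<le> load_deviation W a v})
    \<le> 2 * tail_bound * real (card \<Omega>)"
proof -
  let ?W = "Wdk d k" and ?N = "real (card (Wdk d k))" and ?\<sigma>2 = "real k / real d"
  have \<sigma>2: "0 < ?\<sigma>2" using k one_le_d by simp
  have abs_sum: "(\<Sum>w\<in>?W. \<bar>w v\<bar>) = ?\<sigma>2 * ?N" by (rule sum_Wdk_abs_coord[OF v])
  then have var: "(\<Sum>w\<in>?W. \<bar>w v\<bar>^2) \<le> ?\<sigma>2 * ?N"
    by (simp add: Wdk_coord_sq)
  have dev: "load_deviation W a v = \<bar>(\<Sum>j\<in>{1..q}. \<bar>W (a, j) v\<bar>) - real q * ((\<Sum>w\<in>?W. \<bar>w v\<bar>) / ?N)\<bar>" for W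
    unfolding abs_sum using Wdk_nonempty[OF k(3)] by (simp add: load_deviation_def)
  have "real (card {W \<in> \<Omega>. real q * ?\<sigma>2 \<le> load_deviation W a v})
      \<le> 2 * exp (- real q * ?\<sigma>2^2 / (4 * ?\<sigma>2)) * real (card \<Omega>)"
    unfolding dev using Wdk_abs_coord_le_1 \<sigma>2
    by (intro card_row_deviation[OF a _ var]) auto
  also have "\<dots> \<le> 2 * tail_bound * real (card \<Omega>)"
    using exp_load_tail_le[OF L1] by (intro mult_right_mono) simp_all
  finally show ?thesis .
qed

lemma card_bad_event:
  assumes L1: "1 \<le> L" and a: "a \<in> {1..r}" and x: "x \<in> X" and v: "v < d"
  shows "real (card (bad_event a x v)) \<le> 4 * tail_bound * real (card \<Omega>)"
proof -
  have "card (bad_event a x v) \<le> card {W \<in> \<Omega>. real q * (\<nu> * \<epsilon>) \<le> vote_deviation W a x v}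
      + card {W \<in> \<Omega>. real q * (real k / real d) \<le> load_deviation W a v}"
    unfolding bad_event_def by (rule card_Un_le)
  then show ?thesis using card_vote_deviation[OF assms] card_load_deviation[OF L1 a v] by linarith
qed

text \<open>The factor \<open>1 + \<epsilon>\<close> keeps the values of the estimator inside \<open>[-1, 1]\<close>.\<close>

definition row_estimator :: "(nat \<times> nat \<Rightarrow> nat \<Rightarrow> real) \<Rightarrow> nat \<Rightarrow> nat \<Rightarrow> (nat \<times> nat) rpoly" where
  "row_estimator W a v =
     (\<Sum>j\<in>{1..q}. rpoly_const (W (a, j) v / ((1 + \<epsilon>) * (real q * \<nu>))) * rpoly_var (a, j))"

lemma row_estimator_vars: "1 \<le> a \<Longrightarrow> rpoly_vars (row_estimator W a v) \<subseteq> levels q a"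
  unfolding row_estimator_def levels_def
  by (intro rpoly_vars_sum order_trans[OF rpoly_vars_const_mult]) auto

lemma row_estimator_deg: "rpoly_deg_le (row_estimator W a v) 1"
  unfolding row_estimator_def by (intro rpoly_deg_le_sum rpoly_deg_le_const_mult rpoly_deg_le_var) simp

lemma row_estimator_eval:
  "rpoly_eval (row_estimator W a v) (\<lambda>m. fstar d G W m x)
     = (\<Sum>j\<in>{1..q}. W (a, j) v * fstar d G W (a, j) x) / ((1 + \<epsilon>) * (real q * \<nu>))"
  unfolding row_estimator_def by (simp add: rpoly_eval_sum rpoly_eval_mult sum_divide_distrib)

lemma row_estimator_norm:
  assumes W: "W \<in> \<Omega>" and good: "W \<notin> bad_event a x v"
  shows "coeff_l1_norm (row_estimator W a v) \<le> 10 * sqrt (real k)"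
proof -
  let ?c = "(1 + \<epsilon>) * (real q * \<nu>)"
  have q\<nu>: "0 < real q * \<nu>" using q \<nu>_pos by simp
  have c: "real q * \<nu> \<le> ?c" using q\<nu> \<epsilon>_pos by (simp add: algebra_simps)
  then have c_abs: "\<bar>?c\<bar> = ?c" using q\<nu> by simp
  have "load_deviation W a v < real q * (real k / real d)"
    using W good by (auto simp: bad_event_def)
  then have load: "(\<Sum>j\<in>{1..q}. \<bar>W (a, j) v\<bar>) \<le> 2 * (real q * (real k / real d))"
    unfolding load_deviation_def by (smt (verit))
  have "coeff_l1_norm (row_estimator W a v) \<le> (\<Sum>j\<in>{1..q}. \<bar>W (a, j) v\<bar> / ?c)"
    unfolding row_estimator_def using q\<nu> c
    by (intro order_trans[OF coeff_l1_norm_sum] sum_mono order_trans[OF coeff_l1_norm_const_mult])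
      (simp add: abs_divide c_abs)
  also have "\<dots> \<le> 2 * (real q * (real k / real d)) / (real q * \<nu>)"
    unfolding sum_divide_distrib[symmetric] using load q\<nu> c by (intro frac_le) auto
  also have "\<dots> = 2 * real k / (real d * \<nu>)"
    using q by (simp add: field_simps)
  also have "\<dots> \<le> 10 * sqrt (real k)"
  proof -
    have "2 * real k = 10 * sqrt (real k) * (sqrt (real k) / 5)" by simp
    also have "\<dots> \<le> 10 * sqrt (real k) * (real d * \<nu>)" using \<nu>_ge by (intro mult_left_mono) auto
    finally show ?thesis using \<nu>_pos one_le_d by (simp add: divide_le_eq)
  qed
  finally show ?thesis .
qed

lemma row_estimator_close:
  assumes W: "W \<in> \<Omega>" and good: "W \<notin> bad_event a x v" and a: "a \<le> r" and x: "x \<in> X" and v: "v < d"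
  shows "\<bar>rpoly_eval (row_estimator W a v) (\<lambda>m. fstar d G W m x)\<bar> \<le> 1 \<and>
    \<bar>rpoly_eval (row_estimator W a v) (\<lambda>m. fstar d G W m x) - G a x v\<bar> \<le> 2 * \<epsilon>"
proof -
  have q\<nu>: "0 < real q * \<nu>" using q \<nu>_pos by simp
  have "vote_deviation W a x v < real q * \<nu> * \<epsilon>"
    using W good by (auto simp: bad_event_def)
  moreover have "\<bar>G a x v\<bar> = 1" using cube_coord[OF G_cube_X[OF a x] v] by auto
  ultimately show ?thesis
    unfolding row_estimator_eval using rescaled_estimate_close[OF q\<nu> \<epsilon>_pos]
    by (simp add: vote_deviation_def mult.assoc)
qed

lemma level_succ_PTF:
  assumes L1: "1 \<le> L" and W: "W \<in> \<Omega>" and i: "i \<in> {2..r}" and j: "j \<in> {1..q}"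
    and good: "\<And>x v. x \<in> X \<Longrightarrow> v < d \<Longrightarrow> W \<notin> bad_event (i - 1) x v"
  shows "is_PTF X (levels q (i - 1)) (\<lambda>x m. fstar d G W m x) (fstar d G W (i, j)) K coeff_bound
    (2 * real k + 1)"
proof (cases "X = {}")
  case True
  then show ?thesis using one_le_coeff_bound by (intro is_PTF_const[of 1]) auto
next
  case False
  then obtain x0 where x0: "x0 \<in> X" by auto
  define a where "a = i - 1"
  have a: "1 \<le> a" "a \<le> r" and i1: "i \<in> {1..r}" using i by (auto simp: a_def)
  have "1 \<le> sqrt (real k)" using k by simp
  then have sk: "1 \<le> 10 * sqrt (real k)" by linarith
  have err: "2 * real k * L * (2 * \<epsilon>) = 1" using k L by (simp add: field_simps)
  have "is_PTF X (levels q a) (\<lambda>x m. fstar d G W m x) (fstar d G W (i, j)) K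
      (2 * real k * sqrt (real ((K + 1) * d ^ K)) * (10 * sqrt (real k)) ^ K) (2 * real k + 1)"
  proof (rule is_PTF_threshold_of_approx_inputs[OF k(1) \<Omega>_row[OF W i1 j] one_le_d less_imp_le[OF L],
        where p = "p i" and P = "P i" and zz = "row_estimator W a" and z = "G a" and e = "2 * \<epsilon>"])
    show "fstar d G W (i, j) x = sgn (\<Sum>l<d. W (i, j) l * p i l (G a x))" if "x \<in> X" for x
      using G_step[OF i1 _ that] by (simp add: fstar_def a_def)
  qed (use P[OF i1] p_sign[OF i1] row_estimator_vars[OF a(1)] row_estimator_deg
      row_estimator_norm[OF W good[OF x0, folded a_def]] row_estimator_close[OF W good[folded a_def] a(2)]
      G_cube_X[OF a(2)] err sk in auto)
  then show ?thesis
    using coeff_bound_ge[OF sk order_refl] unfolding a_def by (rule is_PTF_mono)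
qed

lemma card_bad_events:
  assumes L1: "1 \<le> L"
  shows "real (card (\<Union>(a, x, v)\<in>{1..<r} \<times> X \<times> {..<d}. bad_event a x v))
    \<le> 4 * real d * real r * real q * real (card X) * tail_bound * real (card \<Omega>)"
proof -
  let ?E = "{1..<r} \<times> X \<times> {..<d}"
  have "card (\<Union>(a, x, v)\<in>?E. bad_event a x v) \<le> (\<Sum>(a, x, v)\<in>?E. card (bad_event a x v))"
    using card_UN_le[of ?E "\<lambda>(a, x, v). bad_event a x v"] finite_X by (simp add: case_prod_unfold)
  then have "real (card (\<Union>(a, x, v)\<in>?E. bad_event a x v)) \<le> (\<Sum>(a, x, v)\<in>?E. real (card (bad_event a x v)))"
    by (simp add: case_prod_unfold flip: of_nat_sum)
  also have "\<dots> \<le> (\<Sum>e\<in>?E. 4 * tail_bound * real (card \<Omega>))"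
    using card_bad_event[OF L1] by (intro sum_mono) auto
  also have "\<dots> = real (r - 1) * (real (card X) * real d) * (4 * tail_bound * real (card \<Omega>))"
    using finite_X by (simp add: card_cartesian_product)
  also have "\<dots> \<le> (real r * real q) * (real (card X) * real d) * (4 * tail_bound * real (card \<Omega>))"
  proof (intro mult_right_mono)
    have "real (r - 1) \<le> real r" by simp
    also have "\<dots> \<le> real r * real q" using q by (simp add: mult_le_cancel_left1)
    finally show "real (r - 1) \<le> real r * real q" .
  qed (simp_all add: tail_bound_def)
  finally show ?thesis by (simp add: mult_ac)
qed

lemma hierarchy_if_no_bad_event:
  assumes L1: "1 \<le> L" and W: "W \<in> \<Omega>"
    and good: "\<And>a x v. a \<in> {1..<r} \<Longrightarrow> x \<in> X \<Longrightarrow> v < d \<Longrightarrow> W \<notin> bad_event a x v"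
  shows "has_hierarchy X d r (levels q) (fstar d G W) K coeff_bound (2 * real k + 1)"
proof (rule has_hierarchy_levelsI[where f = "fstar d G W", OF K one_le_coeff_bound _ fstar_sign[OF W]])
  show "is_PTF X {..<d} (\<lambda>x. x) (fstar d G W (1, j)) K coeff_bound (2 * real k + 1)"
    if "j \<in> {1..q}" for j
    using that by (rule level1_PTF[OF W])
  show "is_PTF X (levels q (i - 1)) (\<lambda>x m. fstar d G W m x) (fstar d G W (i, j)) K coeff_bound
      (2 * real k + 1)" if "i \<in> {2..r}" "j \<in> {1..q}" for i j
  proof (rule level_succ_PTF[OF L1 W that])
    fix x v assume "x \<in> X" "v < d"
    moreover have "i - 1 \<in> {1..<r}" using that by auto
    ultimately show "W \<notin> bad_event (i - 1) x v" by (intro good)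
  qed
qed simp

theorem prob_hierarchy:
  "1 - 4 * real d * real r * real q * real (card X) * tail_bound
     \<le> measure_pmf.prob (pmf_of_set \<Omega>)
         {W. has_hierarchy X d r (levels q) (fstar d G W) K coeff_bound (2 * real k + 1)}"
proof -
  have fin: "finite \<Omega>" by (simp add: finite_PiE)
  have ne: "\<Omega> \<noteq> {}" using Wdk_nonempty[OF k(3)] by (simp add: PiE_eq_empty_iff)
  show ?thesis
  proof (cases "L < 1")
    case True
    have "1 - 0 \<le> measure_pmf.prob (pmf_of_set \<Omega>)
        {W. has_hierarchy X d r (levels q) (fstar d G W) K coeff_bound (2 * real k + 1)}"
      by (rule prob_pmf_of_set_ge[OF fin ne, of "{}"]) (use hierarchy_if_lipschitz_lt_1[OF True] in auto)
    moreover have "0 \<le> 4 * real d * real r * real q * real (card X) * tail_bound"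
      by (simp add: tail_bound_def)
    ultimately show ?thesis by linarith
  next
    case False
    then have L1: "1 \<le> L" by simp
    show ?thesis
    proof (rule prob_pmf_of_set_ge[OF fin ne _ _ card_bad_events[OF L1]])
      show "(\<Union>(a, x, v)\<in>{1..<r} \<times> X \<times> {..<d}. bad_event a x v) \<subseteq> \<Omega>"
        by (auto simp: bad_event_def)
      show "\<Omega> - (\<Union>(a, x, v)\<in>{1..<r} \<times> X \<times> {..<d}. bad_event a x v)
          \<subseteq> {W. has_hierarchy X d r (levels q) (fstar d G W) K coeff_bound (2 * real k + 1)}"
      proof clarify
        fix W assume "W \<in> \<Omega>" and "W \<notin> (\<Union>(a, x, v)\<in>{1..<r} \<times> X \<times> {..<d}. bad_event a x v)"
        then show "has_hierarchy X d r (levels q) (fstar d G W) K coeff_bound (2 * real k + 1)"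
          by (intro hierarchy_if_no_bad_event[OF L1]) blast+
      qed
    qed
  qed
qed

end

lemma prob_hierarchy_ge:
  assumes "1 \<le> K" and "X \<subseteq> cube d" "r \<ge> 1" "q \<ge> 1" "L > 0" "odd k" "1 \<le> k" "k \<le> d"
    and "\<forall>i\<le>r. \<forall>x\<in>cube d. G i x \<in> cube d" "\<forall>x\<in>cube d. G 0 x = x"
    and hyps: "\<forall>i\<in>{1..r}. \<forall>j<d. (\<forall>x\<in>cube d. p i j x \<in> {-1, 1}) \<and>
       (\<exists>P. is_multilinear_ext d (p i j) P \<and> rpoly_deg_le P K \<and> lipschitz_box d L P) \<and>
       (\<forall>x\<in>X. G i x j = p i j (G (i - 1) x))"
  shows "1 - 4 * real d * real r * real q * real (card X) * exp (- (1 / 1600) * real q / (L^2 * real k^2 * real d))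
    \<le> measure_pmf.prob (pmf_of_set (PiE ({1..r} \<times> {1..q}) (\<lambda>_. Wdk d k)))
        {W. has_hierarchy X d r (levels q) (fstar d G W) K (2 * (real K + 1) * 10 ^ K * real k * real d ^ K)
          (2 * real k + 1)}"
proof -
  obtain P where P: "\<And>i j. i \<in> {1..r} \<Longrightarrow> j < d \<Longrightarrow>
      is_multilinear_ext d (p i j) (P i j) \<and> rpoly_deg_le (P i j) K \<and> lipschitz_box d L (P i j)"
    using hyps by metis
  interpret layered_model K d r q k X L G p P
    using assms P by unfold_locales auto
  show ?thesis using prob_hierarchy unfolding coeff_bound_def tail_bound_def .
qed

theorem theorem6:
  fixes K :: nat
  assumes "K \<ge> 1"
  shows "\<exists>c C. c > 0 \<and> C > 0 \<and>
    (\<forall>(d::nat) (X :: (nat \<Rightarrow> real) set) (r::nat) (q::nat) (L::real) (k::nat)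
       (G :: nat \<Rightarrow> (nat \<Rightarrow> real) \<Rightarrow> (nat \<Rightarrow> real))
       (p :: nat \<Rightarrow> nat \<Rightarrow> (nat \<Rightarrow> real) \<Rightarrow> real).
      X \<subseteq> cube d \<and> r \<ge> 1 \<and> q \<ge> 1 \<and> L > 0 \<and> odd k \<and> 1 \<le> k \<and> k \<le> d \<and>
      (\<forall>i\<le>r. \<forall>x\<in>cube d. G i x \<in> cube d) \<and>
      (\<forall>x\<in>cube d. G 0 x = x) \<and>
      (\<forall>i\<in>{1..r}. \<forall>j<d.
         (\<forall>x\<in>cube d. p i j x \<in> {-1, 1}) \<and>
         (\<exists>P. is_multilinear_ext d (p i j) P \<and> rpoly_deg_le P K \<and> lipschitz_box d L P) \<and>
         (\<forall>x\<in>X. G i x j = p i j (G (i - 1) x)))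
      \<longrightarrow>
      measure_pmf.prob (pmf_of_set (PiE ({1..r} \<times> {1..q}) (\<lambda>_. Wdk d k)))
        {W. has_hierarchy X d r (levels q) (fstar d G W) K (C * real k * real d ^ K) (2 * real k + 1)}
      \<ge> 1 - 4 * real d * real r * real q * real (card X)
            * exp (- c * real q / (L^2 * real k^2 * real d)))"
  by (rule exI[of _ "1 / 1600"], rule exI[of _ "2 * (real K + 1) * 10 ^ K"], intro conjI allI impI)
    (simp, simp, elim conjE, rule prob_hierarchy_ge[OF assms], assumption+)

end
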